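(* Assume the van Kampen setup below, with compatible future retracts $Q_k:\vec\pi_1(X_k)\to\vec\pi_1(X_k,B_k)$ and compatible future retracts $P_k:\vec\pi_1(X_k,B_k)\to\vec\pi_1(X_k,A_k)$ ($k=0,1,2$), and let $P:\vec\pi_1(X,B)\to\vec\pi_1(X,A)$ be the unique functor with $P\circ j_k=j'_k\circ P_k$ ($k=1,2$). For $x\in B$ let $\eta_x:x\to P(x)$ be the image in $\vec\pi_1(X,B)$ of the unit $\eta^k_x$ of $P_k$ for any $k\in\{1,2\}$ with $x\in B_k$ (this does not depend on $k$). Then for every morphism $[\gamma]:x\to y$ of $\vec\pi_1(X,B)$ one has $\eta_y\circ[\gamma]=P([\gamma])\circ\eta_x$ in $\vec\pi_1(X,B)$.
   Context: A d-space is a topological space with a set of continuous paths $[0,1]\to X$ (dipaths) containing all constant paths, closed under precomposition with continuous non-decreasing maps $[0,1]\to[0,1]$ and under concatenation; subsets carry the dipaths with image in them. The fundamental category $\vec\pi_1(X)$ has objects the points of $X$ and morphisms $a\to b$ the classes of dipaths from $a$ to $b$ modulo the equivalence relation generated by endpoint-fixing directed homotopies; composition is concatenation. For $A\subseteq X$, $\vec\pi_1(X,A)$ is the full subcategory on objects in $A$. For $A\subseteq B\subseteq X$ with inclusion $\iota:\vec\pi_1(X,A)\to\vec\pi_1(X,B)$, a future retract is a functor $P:\vec\pi_1(X,B)\to\vec\pi_1(X,A)$ left adjoint to $\iota$ whose unit satisfies $\eta_a=\mathrm{id}_a$ for $a\in A$. Van Kampen setup: $X$ a d-space, $X_1,X_2\subseteq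 X$ with $X=\mathrm{Int}(X_1)\cup\mathrm{Int}(X_2)$, dipaths of $X$ the finite concatenations of dipaths of $X_1$ and $X_2$, $X_0=X_1\cap X_2$. For $k=0,1,2$, $A_k\subseteq B_k\subseteq X_k$ with $A_0=A_1\cap A_2$, $B_0=B_1\cap B_2$, $A=A_1\cup A_2$, $B=B_1\cup B_2$, $A=\mathrm{Int}_A(A_1)\cup\mathrm{Int}_A(A_2)$, $B=\mathrm{Int}_B(B_1)\cup\mathrm{Int}_B(B_2)$. Inclusion-induced functors: $i_k:\vec\pi_1(X_0,B_0)\to\vec\pi_1(X_k,B_k)$, $j_k:\vec\pi_1(X_k,B_k)\to\vec\pi_1(X,B)$, $i'_k:\vec\pi_1(X_0,A_0)\to\vec\pi_1(X_k,A_k)$, $j'_k:\vec\pi_1(X_k,A_k)\to\vec\pi_1(X,A)$ ($k=1,2$). Compatible future retracts $Q_k:\vec\pi_1(X_k)\to\vec\pi_1(X_k,B_k)$: each a future retract with unit $\theta^k$, commuting with the inclusion-induced functors from index $0$ to $k=1,2$, with $\theta^0_x$ mapping to $\theta^k_x$ for $x\in X_0$. Compatible future retracts $P_k:\vec\pi_1(X_k,B_k)\to\vec\pi_1(X_k,A_k)$: each a future retract with unit $\eta^k$, $P_k\circ i_k=i'_k\circ P_0$ ($k=1,2$), and $\eta^0_x$ mapping to $\eta^k_x$ for $x\in B_0$. *)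

theory Defs
  imports "HOL-Analysis.Analysis"
begin

text \<open>Paths are functions real => 'a; only their values on [0,1] matter.
  A d-space is a topology X together with a predicate d selecting the dipaths.\<close>

definition dconcat :: "(real \<Rightarrow> 'a) \<Rightarrow> (real \<Rightarrow> 'a) \<Rightarrow> real \<Rightarrow> 'a" where
  "dconcat p q = (\<lambda>t. if t \<le> 1/2 then p (2 * t) else q (2 * t - 1))"

definition dspace :: "'a topology \<Rightarrow> ((real \<Rightarrow> 'a) \<Rightarrow> bool) \<Rightarrow> bool" where
  "dspace X d \<longleftrightarrow>
     (\<forall>p. d p \<longrightarrow> continuous_map (top_of_set {0..1::real}) X p) \<and>
     (\<forall>x\<in>topspace X. d (\<lambda>t. x)) \<and>
     (\<forall>p \<phi>. d p \<and> continuous_on {0..1} \<phi> \<and> \<phi> ` {0..1} \<subseteq> {0..1::real} \<and> mono_on {0..1} \<phi>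
            \<longrightarrow> d (p \<circ> \<phi>)) \<and>
     (\<forall>p q. d p \<and> d q \<and> p 1 = q 0 \<longrightarrow> d (dconcat p q)) \<and>
     (\<forall>p q. d p \<and> (\<forall>t\<in>{0..1}. q t = p t) \<longrightarrow> d q)"

definition dipath :: "((real \<Rightarrow> 'a) \<Rightarrow> bool) \<Rightarrow> 'a set \<Rightarrow> (real \<Rightarrow> 'a) \<Rightarrow> bool" where
  "dipath d S p \<longleftrightarrow> d p \<and> p ` {0..1} \<subseteq> S"

text \<open>Endpoint-fixing directed homotopy (d-homotopy) from p to q in the subspace S:
  a d-map H from the directed square (dipaths = pairs of continuous non-decreasing maps)
  into S, with H(-,0) = p, H(-,1) = q, and fixed endpoints.\<close>
definition dhomotopic :: "'a topology \<Rightarrow> ((real \<Rightarrow> 'a) \<Rightarrow> bool) \<Rightarrow> 'a set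
     \<Rightarrow> (real \<Rightarrow> 'a) \<Rightarrow> (real \<Rightarrow> 'a) \<Rightarrow> bool" where
  "dhomotopic X d S p q \<longleftrightarrow> (\<exists>H :: real \<Rightarrow> real \<Rightarrow> 'a.
     continuous_map (top_of_set ({0..1} \<times> {0..1::real})) (subtopology X S) (\<lambda>(t, s). H t s) \<and>
     (\<forall>u v. continuous_on {0..1} u \<and> continuous_on {0..1} v \<and>
            u ` {0..1} \<subseteq> {0..1::real} \<and> v ` {0..1} \<subseteq> {0..1::real} \<and>
            mono_on {0..1} u \<and> mono_on {0..1} v
            \<longrightarrow> dipath d S (\<lambda>t. H (u t) (v t))) \<and>
     (\<forall>t\<in>{0..1}. H t 0 = p t \<and> H t 1 = q t) \<and>
     (\<forall>s\<in>{0..1}. H 0 s = p 0 \<and> H 1 s = p 1))"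

definition dclass :: "'a topology \<Rightarrow> ((real \<Rightarrow> 'a) \<Rightarrow> bool) \<Rightarrow> 'a set
     \<Rightarrow> (real \<Rightarrow> 'a) \<Rightarrow> (real \<Rightarrow> 'a) set" where
  "dclass X d S p = {q. dipath d S q \<and> q 0 = p 0 \<and> q 1 = p 1 \<and> equivclp (dhomotopic X d S) p q}"

definition dmor :: "'a topology \<Rightarrow> ((real \<Rightarrow> 'a) \<Rightarrow> bool) \<Rightarrow> 'a set
     \<Rightarrow> 'a \<Rightarrow> 'a \<Rightarrow> (real \<Rightarrow> 'a) set \<Rightarrow> bool" where
  "dmor X d S a b f \<longleftrightarrow> (\<exists>p. dipath d S p \<and> p 0 = a \<and> p 1 = b \<and> f = dclass X d S p)"

text \<open>Composition g o f (first f, then g): class of the concatenation.\<close>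
definition dcomp :: "'a topology \<Rightarrow> ((real \<Rightarrow> 'a) \<Rightarrow> bool) \<Rightarrow> 'a set
     \<Rightarrow> (real \<Rightarrow> 'a) set \<Rightarrow> (real \<Rightarrow> 'a) set \<Rightarrow> (real \<Rightarrow> 'a) set" where
  "dcomp X d S g f = (\<Union>p\<in>f. \<Union>q\<in>g. dclass X d S (dconcat p q))"

definition did :: "'a topology \<Rightarrow> ((real \<Rightarrow> 'a) \<Rightarrow> bool) \<Rightarrow> 'a set \<Rightarrow> 'a \<Rightarrow> (real \<Rightarrow> 'a) set" where
  "did X d S a = dclass X d S (\<lambda>t. a)"

definition dincl :: "'a topology \<Rightarrow> ((real \<Rightarrow> 'a) \<Rightarrow> bool) \<Rightarrow> 'a set
     \<Rightarrow> (real \<Rightarrow> 'a) set \<Rightarrow> (real \<Rightarrow> 'a) set" where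
  "dincl X d Y f = (\<Union>p\<in>f. dclass X d Y p)"

text \<open>(Fo, Fm) is a functor from the fundamental category of S1 restricted to objects T1
  (i.e. pi_1(S1, T1)) to pi_1(S2, T2).\<close>
definition dfunctor :: "'a topology \<Rightarrow> ((real \<Rightarrow> 'a) \<Rightarrow> bool) \<Rightarrow> 'a set \<Rightarrow> 'a set \<Rightarrow> 'a set \<Rightarrow> 'a set
     \<Rightarrow> ('a \<Rightarrow> 'a) \<Rightarrow> ((real \<Rightarrow> 'a) set \<Rightarrow> (real \<Rightarrow> 'a) set) \<Rightarrow> bool" where
  "dfunctor X d S1 T1 S2 T2 Fo Fm \<longleftrightarrow>
     (\<forall>x\<in>T1. Fo x \<in> T2) \<and>
     (\<forall>x\<in>T1. \<forall>y\<in>T1. \<forall>f. dmor X d S1 x y f \<longrightarrow> dmor X d S2 (Fo x) (Fo y) (Fm f)) \<and>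
     (\<forall>x\<in>T1. Fm (did X d S1 x) = did X d S2 (Fo x)) \<and>
     (\<forall>x\<in>T1. \<forall>y\<in>T1. \<forall>z\<in>T1. \<forall>f g. dmor X d S1 x y f \<and> dmor X d S1 y z g
        \<longrightarrow> Fm (dcomp X d S1 g f) = dcomp X d S2 (Fm g) (Fm f))"

text \<open>Future retract: (Po, Pm) : pi_1(S, B) -> pi_1(S, A) is left adjoint to the inclusion
  pi_1(S, A) -> pi_1(S, B), with unit eta (a natural transformation id -> iota P whose
  components are universal arrows to the inclusion), and eta a = id for a in A.\<close>
definition future_retract :: "'a topology \<Rightarrow> ((real \<Rightarrow> 'a) \<Rightarrow> bool) \<Rightarrow> 'a set \<Rightarrow> 'a set \<Rightarrow> 'a set
     \<Rightarrow> ('a \<Rightarrow> 'a) \<Rightarrow> ((real \<Rightarrow> 'a) set \<Rightarrow> (real \<Rightarrow> 'a) set) \<Rightarrow> ('a \<Rightarrow> (real \<Rightarrow> 'a) set) \<Rightarrow> bool" where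
  "future_retract X d S A B Po Pm eta \<longleftrightarrow>
     A \<subseteq> B \<and> B \<subseteq> S \<and>
     dfunctor X d S B S A Po Pm \<and>
     (\<forall>x\<in>B. dmor X d S x (Po x) (eta x)) \<and>
     (\<forall>x\<in>B. \<forall>y\<in>B. \<forall>f. dmor X d S x y f
        \<longrightarrow> dcomp X d S (eta y) f = dcomp X d S (Pm f) (eta x)) \<and>
     (\<forall>x\<in>B. \<forall>a\<in>A. \<forall>g. dmor X d S x a g
        \<longrightarrow> (\<exists>!h. dmor X d S (Po x) a h \<and> dcomp X d S h (eta x) = g)) \<and>
     (\<forall>a\<in>A. eta a = did X d S a)"

end

theory Submission
  imports Defs
begin

(* (1) Factorisation.  Every such f is "piecewise": a composite of images of morphisms
       of the categories pi_1(X_k, B_k).  Subdivide a representing dipath into pieces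
       lying in X_1 or X_2 and push the prefixes into B with the compatible future
       retracts Q_k : pi_1(X_k) -> pi_1(X_k,B_k), one piece at a time (locale
       compatible_retracts, lemma dmor_piecewise).
   (2) Naturality along piecewise morphisms, by induction on the decomposition: each
       piece is a naturality square of one P_k, and squares paste (piecewise_natural). *)

lemma dspace_cont: "dspace X d \<Longrightarrow> d p \<Longrightarrow> continuous_map (top_of_set {0..1}) X p"
  unfolding dspace_def by blast

lemma dspace_const: "dspace X d \<Longrightarrow> x \<in> topspace X \<Longrightarrow> d (\<lambda>t. x)"
  unfolding dspace_def by blast

lemma dspace_concat: "dspace X d \<Longrightarrow> d p \<Longrightarrow> d q \<Longrightarrow> p 1 = q 0 \<Longrightarrow> d (dconcat p q)"
  unfolding dspace_def by blast

lemma dspace_eq: "dspace X d \<Longrightarrow> d p \<Longrightarrow> (\<And>t. t \<in> {0..1} \<Longrightarrow> q t = p t) \<Longrightarrow> d q"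
  unfolding dspace_def by blast

definition reparam :: "(real \<Rightarrow> real) \<Rightarrow> bool" where
  "reparam f \<longleftrightarrow> continuous_on {0..1} f \<and> f ` {0..1} \<subseteq> {0..1} \<and> mono_on {0..1} f"

lemma reparam_in: "reparam f \<Longrightarrow> t \<in> {0..1} \<Longrightarrow> f t \<in> {0..1}"
  unfolding reparam_def by blast

lemma reparam_mono: "reparam f \<Longrightarrow> r \<in> {0..1} \<Longrightarrow> s \<in> {0..1} \<Longrightarrow> r \<le> s \<Longrightarrow> f r \<le> f s"
  unfolding reparam_def by (metis mono_onD)

lemma reparam_cont: "reparam f \<Longrightarrow> continuous_on {0..1} f"
  unfolding reparam_def by blast

lemma dspace_reparam: "dspace X d \<Longrightarrow> d p \<Longrightarrow> reparam f \<Longrightarrow> d (\<lambda>t. p (f t))"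
  unfolding dspace_def reparam_def o_def by blast

lemma reparam_comp:
  assumes f: "reparam f" and g: "reparam g"
  shows "reparam (\<lambda>t. f (g t))"
  unfolding reparam_def
proof (intro conjI)
  show "continuous_on {0..1} (\<lambda>t. f (g t))"
    using continuous_on_compose2[of "{0..1}" f "{0..1}" g] f g by (simp add: reparam_def)
  show "(\<lambda>t. f (g t)) ` {0..1} \<subseteq> {0..1}"
    using reparam_in[OF f] reparam_in[OF g] by blast
  show "mono_on {0..1} (\<lambda>t. f (g t))"
    by (rule mono_onI) (use reparam_in[OF g] reparam_mono[OF g] reparam_mono[OF f] in blast)
qed

lemma reparam_id: "reparam (\<lambda>t. t)"
  unfolding reparam_def by (auto intro: mono_onI)

lemma reparam_const: "c \<in> {0..1} \<Longrightarrow> reparam (\<lambda>t. c)"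
  unfolding reparam_def by (auto intro: mono_onI)

lemma affine_in_interval:
  fixes a b t :: real
  assumes "a \<le> b" "t \<in> {0..1}"
  shows "a + (b - a) * t \<in> {a..b}"
proof -
  have "(b - a) * t \<le> (b - a) * 1" using assms by (intro mult_left_mono) auto
  moreover have "0 \<le> (b - a) * t" using assms by auto
  ultimately show ?thesis by auto
qed

lemma reparam_affine: "0 \<le> a \<Longrightarrow> a \<le> b \<Longrightarrow> b \<le> (1::real) \<Longrightarrow> reparam (\<lambda>t. a + (b - a) * t)"
  unfolding reparam_def
proof (intro conjI)
  assume ab: "0 \<le> a" "a \<le> b" "b \<le> (1::real)"
  show "continuous_on {0..1} (\<lambda>t. a + (b - a) * t)"
    by (intro continuous_intros)
  show "(\<lambda>t. a + (b - a) * t) ` {0..1} \<subseteq> {0..1}"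
    using affine_in_interval[OF ab(2)] ab by force
  show "mono_on {0..1} (\<lambda>t. a + (b - a) * t)"
    by (rule mono_onI) (use ab in \<open>auto intro: mult_left_mono\<close>)
qed

lemma reparam_rescale:
  assumes f: "reparam f" and a: "0 \<le> a" and range: "\<And>t. t \<in> {0..1} \<Longrightarrow> a * f t + b \<in> {0..1}"
  shows "reparam (\<lambda>t. a * f t + b)"
  unfolding reparam_def
proof (intro conjI)
  show "continuous_on {0..1} (\<lambda>t. a * f t + b)"
    using reparam_cont[OF f] by (intro continuous_intros)
  show "(\<lambda>t. a * f t + b) ` {0..1} \<subseteq> {0..1}" using range by blast
  show "mono_on {0..1} (\<lambda>t. a * f t + b)"
    by (rule mono_onI) (use a reparam_mono[OF f] in \<open>auto intro: mult_left_mono\<close>)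
qed

lemma reparam_max: "reparam f \<Longrightarrow> reparam g \<Longrightarrow> reparam (\<lambda>t. max (f t) (g t))"
  unfolding reparam_def
proof (elim conjE, intro conjI)
  assume "continuous_on {0..1} f" "continuous_on {0..1} g"
  then show "continuous_on {0..1} (\<lambda>t. max (f t) (g t))" by (rule continuous_on_max)
  assume "f ` {0..1} \<subseteq> {0..1}" "g ` {0..1} \<subseteq> {0..1}"
  then show "(\<lambda>t. max (f t) (g t)) ` {0..1} \<subseteq> {0..1}" by (auto simp: max_def)
  assume "mono_on {0..1} f" "mono_on {0..1} g"
  then show "mono_on {0..1} (\<lambda>t. max (f t) (g t))"
    by (intro mono_onI max.mono) (meson atLeastAtMost_iff mono_onD order_trans)+
qed

text \<open>This is what makes
  the straight-line homotopy between them directed.\<close>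

lemma convex_combination_in:
  fixes a b s :: real
  assumes "a \<in> {0..1}" "b \<in> {0..1}" "s \<in> {0..1}"
  shows "(1 - s) * a + s * b \<in> {0..1}"
proof -
  have "(1 - s) * a \<le> (1 - s) * 1" "s * b \<le> s * 1"
    using assms by (intro mult_left_mono; auto)+
  moreover have "0 \<le> (1 - s) * a" "0 \<le> s * b" using assms by auto
  ultimately show ?thesis by auto
qed

lemma convex_combination_mono:
  fixes a a' b b' s s' :: real
  assumes "a \<le> a'" "b \<le> b'" "a' \<le> b'" "0 \<le> s" "s \<le> s'" "s \<le> 1"
  shows "(1 - s) * a + s * b \<le> (1 - s') * a' + s' * b'"
proof -
  have "(1 - s) * a \<le> (1 - s) * a'" "s * b \<le> s * b'" "(s' - s) * a' \<le> (s' - s) * b'"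
    using assms by (intro mult_left_mono; auto)+
  then show ?thesis by (simp add: algebra_simps)
qed

lemma reparam_convex:
  assumes \<psi>: "reparam \<psi>" and \<phi>: "reparam \<phi>" and le: "\<And>t. t \<in> {0..1} \<Longrightarrow> \<psi> t \<le> \<phi> t"
    and u: "reparam u" and v: "reparam v"
  shows "reparam (\<lambda>t. (1 - v t) * \<psi> (u t) + v t * \<phi> (u t))"
  unfolding reparam_def
proof (intro conjI)
  show "continuous_on {0..1} (\<lambda>t. (1 - v t) * \<psi> (u t) + v t * \<phi> (u t))"
    using reparam_cont[OF reparam_comp[OF \<psi> u]] reparam_cont[OF reparam_comp[OF \<phi> u]]
      reparam_cont[OF v]
    by (intro continuous_intros)
  show "(\<lambda>t. (1 - v t) * \<psi> (u t) + v t * \<phi> (u t)) ` {0..1} \<subseteq> {0..1}"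
    using reparam_in[OF \<psi>] reparam_in[OF \<phi>] reparam_in[OF u] reparam_in[OF v]
    by (auto intro: convex_combination_in)
  show "mono_on {0..1} (\<lambda>t. (1 - v t) * \<psi> (u t) + v t * \<phi> (u t))"
  proof (rule mono_onI)
    fix r s :: real assume rs: "r \<in> {0..1}" "s \<in> {0..1}" "r \<le> s"
    have u': "u r \<in> {0..1}" "u s \<in> {0..1}" "u r \<le> u s"
      using reparam_in[OF u] reparam_mono[OF u] rs by auto
    have v': "v r \<in> {0..1}" "v s \<in> {0..1}" "v r \<le> v s"
      using reparam_in[OF v] reparam_mono[OF v] rs by auto
    show "(1 - v r) * \<psi> (u r) + v r * \<phi> (u r) \<le> (1 - v s) * \<psi> (u s) + v s * \<phi> (u s)"
      by (rule convex_combination_mono)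
         (use u' v' le reparam_mono[OF \<psi>] reparam_mono[OF \<phi>] in auto)
  qed
qed

lemma dipath_in: "dipath d S p \<Longrightarrow> t \<in> {0..1} \<Longrightarrow> p t \<in> S"
  unfolding dipath_def by blast

lemma dipath_mono: "dipath d S p \<Longrightarrow> S \<subseteq> Y \<Longrightarrow> dipath d Y p"
  unfolding dipath_def by blast

lemma dipath_reparam: "dspace X d \<Longrightarrow> dipath d S p \<Longrightarrow> reparam f \<Longrightarrow> dipath d S (\<lambda>t. p (f t))"
  unfolding dipath_def using dspace_reparam reparam_in by blast

lemma dipath_eqI: "dspace X d \<Longrightarrow> dipath d S p \<Longrightarrow> (\<And>t. t \<in> {0..1} \<Longrightarrow> q t = p t) \<Longrightarrow> dipath d S q"
  unfolding dipath_def using dspace_eq[of X d p q] by auto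

lemma dipath_const: "dspace X d \<Longrightarrow> a \<in> topspace X \<Longrightarrow> a \<in> S \<Longrightarrow> dipath d S (\<lambda>t. a)"
  unfolding dipath_def by (auto intro: dspace_const)

lemma dipath_topspace: "dspace X d \<Longrightarrow> dipath d S p \<Longrightarrow> t \<in> {0..1} \<Longrightarrow> p t \<in> topspace X"
  unfolding dipath_def
  by (metis dspace_cont continuous_map_image_subset_topspace image_subset_iff topspace_euclidean_subtopology)

lemma dipath_cont:
  "dspace X d \<Longrightarrow> dipath d S p \<Longrightarrow> continuous_map (top_of_set {0..1}) (subtopology X S) p"
  unfolding dipath_def continuous_map_in_subtopology using dspace_cont by auto

lemma dipath_concat:
  assumes dsp: "dspace X d" and p: "dipath d S p" and q: "dipath d S q" and e: "p 1 = q 0"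
  shows "dipath d S (dconcat p q)"
proof -
  have "d (dconcat p q)" using dspace_concat[OF dsp] p q e unfolding dipath_def by blast
  moreover have "dconcat p q t \<in> S" if "t \<in> {0..1}" for t
    using dipath_in[OF p, of "2*t"] dipath_in[OF q, of "2*t-1"] that unfolding dconcat_def by auto
  ultimately show ?thesis unfolding dipath_def by blast
qed

text \<open>Gluing: a path whose restrictions to \<open>[0,c]\<close> and \<open>[c,1]\<close> are dipaths is a dipath.
  It is a reparametrisation of the concatenation of the two restrictions.\<close>

lemma glue:
  assumes dsp: "dspace X d" and c: "0 \<le> c" "c \<le> 1"
    and a: "d (\<lambda>t. r (c*t))" and b: "d (\<lambda>t. r (c + (1-c)*t))"
  shows "d r"
proof (cases "c = 0 \<or> c = 1")
  case True
  then show ?thesis using a b by auto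
next
  case False
  then have c': "0 < c" "c < 1" using c by auto
  define \<psi> where "\<psi> = (\<lambda>t::real. if t \<le> c then t/(2*c) else 1/2 + (t-c)/(2*(1-c)))"
  have lo: "\<psi> t = t/(2*c)" "0 \<le> \<psi> t" "\<psi> t \<le> 1/2" if "0 \<le> t" "t \<le> c" for t
    using that c' by (auto simp: \<psi>_def divide_le_eq)
  have hi: "\<psi> t = 1/2 + (t-c)/(2*(1-c))" "1/2 < \<psi> t" "\<psi> t \<le> 1" if "c < t" "t \<le> 1" for t
  proof -
    have "0 < (t-c)/(2*(1-c))" "(t-c)/(2*(1-c)) \<le> 1/2"
      using that c' by (simp_all add: divide_le_eq)
    moreover have "\<psi> t = 1/2 + (t-c)/(2*(1-c))" using that by (simp add: \<psi>_def)
    ultimately show "\<psi> t = 1/2 + (t-c)/(2*(1-c))" "1/2 < \<psi> t" "\<psi> t \<le> 1" by linarith+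
  qed
  have \<psi>: "reparam \<psi>"
    unfolding reparam_def
  proof (intro conjI)
    show "continuous_on {0..1} \<psi>"
      unfolding \<psi>_def
    proof (rule continuous_on_cases_le[where h="\<lambda>t. t"])
      show "continuous_on {x \<in> {0..1}. x \<le> c} (\<lambda>t. t / (2 * c))"
        by (intro continuous_intros) (use c' in auto)
      show "continuous_on {x \<in> {0..1}. c \<le> x} (\<lambda>t. 1 / 2 + (t - c) / (2 * (1 - c)))"
        by (intro continuous_intros) (use c' in auto)
    qed (use c' in simp_all)
    show "\<psi> ` {0..1} \<subseteq> {0..1}"
    proof (rule image_subsetI)
      fix t :: real assume "t \<in> {0..1}"
      then show "\<psi> t \<in> {0..1}" using lo[of t] hi[of t] by (cases "t \<le> c") auto
    qed
    show "mono_on {0..1} \<psi>"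
    proof (rule mono_onI)
      fix x y :: real assume xy: "x \<in> {0..1}" "y \<in> {0..1}" "x \<le> y"
      consider "y \<le> c" | "x \<le> c" "c < y" | "c < x" by linarith
      then show "\<psi> x \<le> \<psi> y"
      proof cases
        case 1
        then show ?thesis using xy c' lo[of x] lo[of y] by (simp add: divide_right_mono)
      next
        case 2
        then have "\<psi> x \<le> 1/2" "1/2 < \<psi> y" using xy lo(3)[of x] hi(2)[of y] by auto
        then show ?thesis by linarith
      next
        case 3
        then show ?thesis using xy c' hi[of x] hi[of y] by (simp add: divide_right_mono)
      qed
    qed
  qed
  define q where "q = dconcat (\<lambda>t. r (c*t)) (\<lambda>t. r (c + (1-c)*t))"
  have "(\<lambda>t. r (c*t)) 1 = (\<lambda>t. r (c + (1-c)*t)) 0" by simp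
  from dspace_concat[OF dsp, OF a b this] have "d q" by (simp only: q_def)
  have "d (\<lambda>t. q (\<psi> t))" by (rule dspace_reparam[OF dsp, OF \<open>d q\<close> \<psi>])
  then show "d r"
  proof (rule dspace_eq[OF dsp])
    fix t :: real assume t: "t \<in> {0..1}"
    show "r t = q (\<psi> t)"
    proof (cases "t \<le> c")
      case True
      then show ?thesis using lo[of t] t c' by (simp add: q_def dconcat_def)
    next
      case False
      then have ct: "c < t" "t \<le> 1" using t by auto
      have upper: "\<not> \<psi> t \<le> 1/2" using hi(2)[OF ct] by linarith
      have inv: "c + (1 - c) * (2 * (1/2 + (t-c)/(2*(1-c))) - 1) = t" using c' by (simp add: field_simps)
      have "q (\<psi> t) = r (c + (1 - c) * (2 * \<psi> t - 1))" using upper by (simp add: q_def dconcat_def)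
      also have "\<dots> = r t" by (simp only: hi(1)[OF ct] inv)
      finally show ?thesis by simp
    qed
  qed
qed

lemma dhomotopicI:
  assumes "continuous_map (top_of_set ({0..1} \<times> {0..1::real})) (subtopology X S) (\<lambda>(t, s). H t s)"
    and "\<And>u v. reparam u \<Longrightarrow> reparam v \<Longrightarrow> dipath d S (\<lambda>t. H (u t) (v t))"
    and "\<And>t. t \<in> {0..1} \<Longrightarrow> H t 0 = p t" "\<And>t. t \<in> {0..1} \<Longrightarrow> H t 1 = q t"
    and "\<And>s. s \<in> {0..1} \<Longrightarrow> H 0 s = p 0" "\<And>s. s \<in> {0..1} \<Longrightarrow> H 1 s = p 1"
  shows "dhomotopic X d S p q"
  unfolding dhomotopic_def using assms unfolding reparam_def by blast

lemma dhomotopicE: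
  assumes "dhomotopic X d S p q"
  obtains H where "continuous_map (top_of_set ({0..1} \<times> {0..1::real})) (subtopology X S) (\<lambda>(t, s). H t s)"
    and "\<And>u v. reparam u \<Longrightarrow> reparam v \<Longrightarrow> dipath d S (\<lambda>t. H (u t) (v t))"
    and "\<And>t. t \<in> {0..1} \<Longrightarrow> H t 0 = p t" "\<And>t. t \<in> {0..1} \<Longrightarrow> H t 1 = q t"
    and "\<And>s. s \<in> {0..1} \<Longrightarrow> H 0 s = p 0" "\<And>s. s \<in> {0..1} \<Longrightarrow> H 1 s = p 1"
  using assms unfolding dhomotopic_def reparam_def by blast

lemma dhomotopic_ends:
  assumes dsp: "dspace X d" and h: "dhomotopic X d S p q"
  shows "dipath d S p" "dipath d S q" "q 0 = p 0" "q 1 = p 1"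
proof -
  obtain H where
    H: "\<And>u v. reparam u \<Longrightarrow> reparam v \<Longrightarrow> dipath d S (\<lambda>t. H (u t) (v t))"
      "\<And>t. t \<in> {0..1} \<Longrightarrow> H t 0 = p t" "\<And>t. t \<in> {0..1} \<Longrightarrow> H t 1 = q t"
      "\<And>s. s \<in> {0..1} \<Longrightarrow> H 0 s = p 0" "\<And>s. s \<in> {0..1} \<Longrightarrow> H 1 s = p 1"
    by (rule dhomotopicE[OF h]) blast
  have "dipath d S (\<lambda>t. H t 0)" using H(1)[OF reparam_id reparam_const[of 0]] by simp
  then show "dipath d S p" by (rule dipath_eqI[OF dsp]) (simp add: H(2))
  have "dipath d S (\<lambda>t. H t 1)" using H(1)[OF reparam_id reparam_const[of 1]] by simp
  then show "dipath d S q" by (rule dipath_eqI[OF dsp]) (simp add: H(3))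
  show "q 0 = p 0" using H(3)[of 0] H(4)[of 1] by simp
  show "q 1 = p 1" using H(3)[of 1] H(5)[of 1] by simp
qed

lemma dhomotopic_refl:
  assumes dsp: "dspace X d" and p: "dipath d S p"
  shows "dhomotopic X d S p p"
proof (rule dhomotopicI[where H="\<lambda>t s. p t"])
  have "continuous_map (top_of_set ({0..1} \<times> {0..1::real})) (top_of_set {0..1}) fst"
    by (simp add: continuous_on_fst[OF continuous_on_id] mem_Times_iff)
  from continuous_map_compose[OF this dipath_cont[OF dsp p]]
  show "continuous_map (top_of_set ({0..1} \<times> {0..1::real})) (subtopology X S) (\<lambda>(t, s). p t)"
    by (simp add: o_def case_prod_unfold)
qed (auto intro: dipath_reparam[OF dsp p])

lemma dhomotopic_mono:
  assumes h: "dhomotopic X d S p q" and SY: "S \<subseteq> Y"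
  shows "dhomotopic X d Y p q"
proof -
  obtain H where
    Hc: "continuous_map (top_of_set ({0..1} \<times> {0..1::real})) (subtopology X S) (\<lambda>(t, s). H t s)"
    and H: "\<And>u v. reparam u \<Longrightarrow> reparam v \<Longrightarrow> dipath d S (\<lambda>t. H (u t) (v t))"
      "\<And>t. t \<in> {0..1} \<Longrightarrow> H t 0 = p t" "\<And>t. t \<in> {0..1} \<Longrightarrow> H t 1 = q t"
      "\<And>s. s \<in> {0..1} \<Longrightarrow> H 0 s = p 0" "\<And>s. s \<in> {0..1} \<Longrightarrow> H 1 s = p 1"
    by (rule dhomotopicE[OF h]) blast
  show ?thesis
  proof (rule dhomotopicI[where H=H])
    show "continuous_map (top_of_set ({0..1} \<times> {0..1::real})) (subtopology X Y) (\<lambda>(t, s). H t s)"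
      using Hc SY unfolding continuous_map_in_subtopology by blast
    show "dipath d Y (\<lambda>t. H (u t) (v t))" if "reparam u" "reparam v" for u v
      using dipath_mono[OF H(1)[OF that] SY] .
  qed (use H in auto)
qed

text \<open>Two comparable reparametrisations of a dipath with the same endpoints are
  d-homotopic: the straight-line homotopy between them is directed.\<close>

lemma reparam_dhomotopic:
  assumes dsp: "dspace X d" and p: "dipath d S p" and \<psi>: "reparam \<psi>" and \<phi>: "reparam \<phi>"
    and le: "\<And>t. t \<in> {0..1} \<Longrightarrow> \<psi> t \<le> \<phi> t" and e0: "\<psi> 0 = \<phi> 0" and e1: "\<psi> 1 = \<phi> 1"
  shows "dhomotopic X d S (\<lambda>t. p (\<psi> t)) (\<lambda>t. p (\<phi> t))"
proof (rule dhomotopicI[where H="\<lambda>t s. p ((1-s) * \<psi> t + s * \<phi> t)"])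
  let ?k = "\<lambda>z::real\<times>real. (1 - snd z) * \<psi> (fst z) + snd z * \<phi> (fst z)"
  have on_fst: "continuous_on ({0..1}\<times>{0..1}) (\<lambda>z. f (fst z))" if "reparam f" for f
    by (rule continuous_on_compose2[OF reparam_cont[OF that] continuous_on_fst[OF continuous_on_id]]) auto
  have "continuous_on ({0..1}\<times>{0..1}) ?k"
    using on_fst[OF \<psi>] on_fst[OF \<phi>] by (intro continuous_intros)
  moreover have "?k \<in> ({0..1}\<times>{0..1}) \<rightarrow> {0..1}"
    using reparam_in[OF \<psi>] reparam_in[OF \<phi>] by (auto intro!: convex_combination_in simp: mem_Times_iff)
  ultimately have "continuous_map (top_of_set ({0..1}\<times>{0..1})) (top_of_set {0..1}) ?k"
    by simp
  from continuous_map_compose[OF this dipath_cont[OF dsp p]]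
  show "continuous_map (top_of_set ({0..1} \<times> {0..1})) (subtopology X S)
     (\<lambda>(t, s). p ((1 - s) * \<psi> t + s * \<phi> t))"
    by (simp add: o_def case_prod_unfold)
next
  fix u v :: "real \<Rightarrow> real"
  assume "reparam u" "reparam v"
  with reparam_convex[OF \<psi> \<phi> le] show "dipath d S (\<lambda>t. p ((1 - v t) * \<psi> (u t) + v t * \<phi> (u t)))"
    by (intro dipath_reparam[OF dsp p]) blast
qed (use e0 e1 in \<open>simp_all add: algebra_simps\<close>)

text \<open>Any two reparametrisations with the same endpoints are connected by two such
  homotopies, through their pointwise maximum.\<close>

lemma reparam_equivclp:
  assumes dsp: "dspace X d" and p: "dipath d S p" and \<psi>: "reparam \<psi>" and \<phi>: "reparam \<phi>"
    and e0: "\<psi> 0 = \<phi> 0" and e1: "\<psi> 1 = \<phi> 1"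
  shows "equivclp (dhomotopic X d S) (\<lambda>t. p (\<psi> t)) (\<lambda>t. p (\<phi> t))"
proof -
  let ?m = "\<lambda>t. max (\<psi> t) (\<phi> t)"
  have "dhomotopic X d S (\<lambda>t. p (\<psi> t)) (\<lambda>t. p (?m t))"
    by (rule reparam_dhomotopic[OF dsp p \<psi> reparam_max[OF \<psi> \<phi>]]) (use e0 e1 in auto)
  moreover have "dhomotopic X d S (\<lambda>t. p (\<phi> t)) (\<lambda>t. p (?m t))"
    by (rule reparam_dhomotopic[OF dsp p \<phi> reparam_max[OF \<psi> \<phi>]]) (use e0 e1 in auto)
  ultimately show ?thesis
    by (meson converse_r_into_equivclp equivclp_trans r_into_equivclp)
qed

text \<open>A map on the square is a directed homotopy on all of it as soon as it is one on
  each half \<open>t \<le> 1/2\<close> and \<open>t \<ge> 1/2\<close>: a dipath of the square crosses the middle line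
  at most once, and is glued from its two halves there.\<close>

lemma dipath_by_halves:
  assumes dsp: "dspace X d"
    and lo: "\<And>u v. reparam u \<Longrightarrow> reparam v \<Longrightarrow> (\<And>t. t \<in> {0..1} \<Longrightarrow> u t \<le> 1/2) \<Longrightarrow>
               dipath d S (\<lambda>t. H (u t) (v t))"
    and hi: "\<And>u v. reparam u \<Longrightarrow> reparam v \<Longrightarrow> (\<And>t. t \<in> {0..1} \<Longrightarrow> 1/2 \<le> u t) \<Longrightarrow>
               dipath d S (\<lambda>t. H (u t) (v t))"
    and u: "reparam u" and v: "reparam v"
  shows "dipath d S (\<lambda>t. H (u t) (v t))"
proof -
  have at_point: "H (u t) (v t) \<in> S" if t: "t \<in> {0..1}" for t
  proof -
    have ut: "u t \<in> {0..1}" and vt: "v t \<in> {0..1}"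
      using reparam_in[OF u t] reparam_in[OF v t] by auto
    have "dipath d S (\<lambda>s. H (u t) (v t))"
    proof (cases "u t \<le> 1/2")
      case True
      then show ?thesis using lo[OF reparam_const[OF ut] reparam_const[OF vt]] by blast
    next
      case False
      then show ?thesis using hi[OF reparam_const[OF ut] reparam_const[OF vt]] by force
    qed
    then show ?thesis using dipath_in[of d S _ 0] by auto
  qed
  consider "u 1 \<le> 1/2" | "1/2 \<le> u 0" | "u 0 < 1/2" "1/2 < u 1" by linarith
  then show ?thesis
  proof cases
    case 1
    have "u t \<le> 1/2" if "t \<in> {0..1}" for t
      using reparam_mono[OF u that, of 1] that 1 by auto
    then show ?thesis by (rule lo[OF u v])
  next
    case 2
    have "1/2 \<le> u t" if "t \<in> {0..1}" for t
      using reparam_mono[OF u _ that, of 0] that 2 by auto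
    then show ?thesis by (rule hi[OF u v])
  next
    case 3
    then obtain c where c: "0 \<le> c" "c \<le> 1" "u c = 1/2"
      using IVT'[of u 0 "1/2" 1] reparam_cont[OF u] by auto
    have l: "reparam (\<lambda>t. c * t)" and r: "reparam (\<lambda>t. c + (1 - c) * t)"
      using reparam_affine[of 0 c] reparam_affine[of c 1] c by simp_all
    have "dipath d S (\<lambda>t. H (u (c * t)) (v (c * t)))"
    proof (rule lo[OF reparam_comp[OF u l] reparam_comp[OF v l]])
      fix t :: real assume "t \<in> {0..1}"
      then show "u (c * t) \<le> 1/2"
        using reparam_mono[OF u, of "c * t" c] c mult_left_le[of t c] by auto
    qed
    moreover have "dipath d S (\<lambda>t. H (u (c + (1 - c) * t)) (v (c + (1 - c) * t)))"
    proof (rule hi[OF reparam_comp[OF u r] reparam_comp[OF v r]])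
      fix t :: real assume "t \<in> {0..1}"
      then show "1/2 \<le> u (c + (1 - c) * t)"
        using reparam_mono[OF u, of c "c + (1 - c) * t"] affine_in_interval[of c 1 t] c by auto
    qed
    ultimately have "d (\<lambda>t. H (u (c * t)) (v (c * t)))"
      "d (\<lambda>t. H (u (c + (1 - c) * t)) (v (c + (1 - c) * t)))"
      unfolding dipath_def by blast+
    then have "d (\<lambda>t. H (u t) (v t))"
      by (rule glue[OF dsp c(1,2), where r="\<lambda>t. H (u t) (v t)"])
    then show ?thesis using at_point unfolding dipath_def by blast
  qed
qed

lemma pasted_square_continuous:
  fixes H1 H2 :: "real \<Rightarrow> real \<Rightarrow> 'a"
  defines "Q \<equiv> {0..1} \<times> {0..1::real}"
  assumes H1: "continuous_map (top_of_set Q) Y (\<lambda>(t, s). H1 t s)"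
    and H2: "continuous_map (top_of_set Q) Y (\<lambda>(t, s). H2 t s)"
    and join: "\<And>s. s \<in> {0..1} \<Longrightarrow> H1 1 s = H2 0 s"
  shows "continuous_map (top_of_set Q) Y
           (\<lambda>(t, s). if t \<le> 1/2 then H1 (2 * t) s else H2 (2 * t - 1) s)"
proof -
  have piece: "continuous_map (subtopology (top_of_set Q) {z. z \<in> topspace (top_of_set Q) \<and> P z}) Y
                 (\<lambda>z. H (fst (g z)) (snd (g z)))"
    if H: "continuous_map (top_of_set Q) Y (\<lambda>(t, s). H t s)"
      and g: "continuous_on {z \<in> Q. P z} g" "g ` {z \<in> Q. P z} \<subseteq> Q" for H g P
  proof -
    have sub: "subtopology (top_of_set Q) {z. z \<in> topspace (top_of_set Q) \<and> P z} = top_of_set {z \<in> Q. P z}"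
      by (simp add: subtopology_subtopology Int_def)
    have "continuous_map (top_of_set {z \<in> Q. P z}) (top_of_set Q) g"
      using g by (auto simp: continuous_map_in_subtopology)
    from continuous_map_compose[OF this H] show ?thesis
      unfolding sub by (simp add: o_def case_prod_unfold)
  qed
  have "continuous_map (top_of_set Q) Y
          (\<lambda>z. if fst z \<le> 1/2 then H1 (2 * fst z) (snd z) else H2 (2 * fst z - 1) (snd z))"
  proof (rule continuous_map_cases_le)
    show "continuous_map (top_of_set Q) euclideanreal fst"
      by (simp add: continuous_on_fst[OF continuous_on_id])
    show "continuous_map (top_of_set Q) euclideanreal (\<lambda>z. 1/2)"
      by simp
    have "continuous_map (subtopology (top_of_set Q) {z. z \<in> topspace (top_of_set Q) \<and> fst z \<le> 1/2}) Y
            (\<lambda>z. H1 (fst (2 * fst z, snd z)) (snd (2 * fst z, snd z)))"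
      by (rule piece[OF H1]; (intro continuous_intros)?) (auto simp: Q_def)
    then show "continuous_map (subtopology (top_of_set Q) {z. z \<in> topspace (top_of_set Q) \<and> fst z \<le> 1/2}) Y
            (\<lambda>z. H1 (2 * fst z) (snd z))"
      by (simp only: fst_conv snd_conv)
    have "continuous_map (subtopology (top_of_set Q) {z. z \<in> topspace (top_of_set Q) \<and> 1/2 \<le> fst z}) Y
            (\<lambda>z. H2 (fst (2 * fst z - 1, snd z)) (snd (2 * fst z - 1, snd z)))"
      by (rule piece[OF H2]; (intro continuous_intros)?) (auto simp: Q_def)
    then show "continuous_map (subtopology (top_of_set Q) {z. z \<in> topspace (top_of_set Q) \<and> 1/2 \<le> fst z}) Y
            (\<lambda>z. H2 (2 * fst z - 1) (snd z))"
      by (simp only: fst_conv snd_conv)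
    fix z assume "z \<in> topspace (top_of_set Q)" "fst z = 1/2"
    then have "2 * fst z = 1" "2 * fst z - 1 = 0" "snd z \<in> {0..1}"
      by (auto simp: Q_def mem_Times_iff)
    then show "H1 (2 * fst z) (snd z) = H2 (2 * fst z - 1) (snd z)"
      using join[of "snd z"] by simp
  qed
  then show ?thesis by (simp add: case_prod_unfold)
qed

text \<open>Concatenation respects d-homotopy in both arguments simultaneously: run the two
  homotopies side by side.\<close>

lemma concat_dhomotopic:
  assumes dsp: "dspace X d" and h1: "dhomotopic X d S p p'" and h2: "dhomotopic X d S q q'"
    and e: "p 1 = q 0"
  shows "dhomotopic X d S (dconcat p q) (dconcat p' q')"
proof -
  obtain H1 where
    H1c: "continuous_map (top_of_set ({0..1} \<times> {0..1::real})) (subtopology X S) (\<lambda>(t, s). H1 t s)"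
    and H1: "\<And>u v. reparam u \<Longrightarrow> reparam v \<Longrightarrow> dipath d S (\<lambda>t. H1 (u t) (v t))"
      "\<And>t. t \<in> {0..1} \<Longrightarrow> H1 t 0 = p t" "\<And>t. t \<in> {0..1} \<Longrightarrow> H1 t 1 = p' t"
      "\<And>s. s \<in> {0..1} \<Longrightarrow> H1 0 s = p 0" "\<And>s. s \<in> {0..1} \<Longrightarrow> H1 1 s = p 1"
    by (rule dhomotopicE[OF h1]) blast
  obtain H2 where
    H2c: "continuous_map (top_of_set ({0..1} \<times> {0..1::real})) (subtopology X S) (\<lambda>(t, s). H2 t s)"
    and H2: "\<And>u v. reparam u \<Longrightarrow> reparam v \<Longrightarrow> dipath d S (\<lambda>t. H2 (u t) (v t))"
      "\<And>t. t \<in> {0..1} \<Longrightarrow> H2 t 0 = q t" "\<And>t. t \<in> {0..1} \<Longrightarrow> H2 t 1 = q' t"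
      "\<And>s. s \<in> {0..1} \<Longrightarrow> H2 0 s = q 0" "\<And>s. s \<in> {0..1} \<Longrightarrow> H2 1 s = q 1"
    by (rule dhomotopicE[OF h2]) blast
  have join: "H1 1 s = H2 0 s" if "s \<in> {0..1}" for s
    using H1(5)[OF that] H2(4)[OF that] e by simp
  define H where "H = (\<lambda>t s. if t \<le> 1/2 then H1 (2 * t) s else H2 (2 * t - 1) s)"
  have H_hi: "H a b = H2 (2 * a - 1) b" if "1/2 \<le> a" "b \<in> {0..1}" for a b
  proof (cases "a = 1/2")
    case True
    then have "2 * a = 1" "2 * a - 1 = 0" by simp_all
    then show ?thesis using join[OF that(2)] by (simp add: H_def)
  qed (use that(1) in \<open>simp add: H_def\<close>)
  show ?thesis
  proof (rule dhomotopicI[where H=H])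
    show "continuous_map (top_of_set ({0..1} \<times> {0..1})) (subtopology X S) (\<lambda>(t, s). H t s)"
      unfolding H_def by (rule pasted_square_continuous[OF H1c H2c join])
    fix u v :: "real \<Rightarrow> real" assume u: "reparam u" and v: "reparam v"
    show "dipath d S (\<lambda>t. H (u t) (v t))"
    proof (rule dipath_by_halves[OF dsp _ _ u v])
      fix u v :: "real \<Rightarrow> real"
      assume u: "reparam u" and v: "reparam v" and le: "\<And>t. t \<in> {0..1} \<Longrightarrow> u t \<le> 1/2"
      have "reparam (\<lambda>t. 2 * u t + 0)"
        by (rule reparam_rescale[OF u]) (use reparam_in[OF u] le in fastforce)+
      from H1(1)[OF this v] show "dipath d S (\<lambda>t. H (u t) (v t))"
        by (rule dipath_eqI[OF dsp]) (use le in \<open>force simp: H_def\<close>)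
    next
      fix u v :: "real \<Rightarrow> real"
      assume u: "reparam u" and v: "reparam v" and ge: "\<And>t. t \<in> {0..1} \<Longrightarrow> 1/2 \<le> u t"
      have "reparam (\<lambda>t. 2 * u t + (-1))"
        by (rule reparam_rescale[OF u]) (use reparam_in[OF u] ge in fastforce)+
      from H2(1)[OF this v] show "dipath d S (\<lambda>t. H (u t) (v t))"
        by (rule dipath_eqI[OF dsp]) (simp add: H_hi[OF ge reparam_in[OF v]])
    qed
  qed (auto simp: H_def dconcat_def H1(2-5) H2(2-5))
qed

lemma equivclp_ends:
  assumes dsp: "dspace X d" and eq: "equivclp (dhomotopic X d S) p q" and p: "dipath d S p"
  shows "dipath d S q \<and> q 0 = p 0 \<and> q 1 = p 1"
  using eq
proof (induction rule: equivclp_induct)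
  case base then show ?case using p by simp
next
  case (step y z)
  then show ?case using dhomotopic_ends[OF dsp, of S y z] dhomotopic_ends[OF dsp, of S z y] by auto
qed

lemma concat_equivclp_left:
  assumes dsp: "dspace X d" and eq: "equivclp (dhomotopic X d S) p p'" and p: "dipath d S p"
    and q: "dipath d S q" and e: "p 1 = q 0"
  shows "equivclp (dhomotopic X d S) (dconcat p q) (dconcat p' q)"
  using eq
proof (induction rule: equivclp_induct)
  case (step y z)
  have "y 1 = p 1" using equivclp_ends[OF dsp step(1) p] by auto
  with step(2) e have "dhomotopic X d S (dconcat y q) (dconcat z q) \<or> dhomotopic X d S (dconcat z q) (dconcat y q)"
    using concat_dhomotopic[OF dsp _ dhomotopic_refl[OF dsp q]] dhomotopic_ends(4)[OF dsp] by metis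
  with step(3) show ?case by (meson equivclp_into_equivclp)
qed simp

lemma concat_equivclp_right:
  assumes dsp: "dspace X d" and eq: "equivclp (dhomotopic X d S) q q'" and p: "dipath d S p"
    and q: "dipath d S q" and e: "p 1 = q 0"
  shows "equivclp (dhomotopic X d S) (dconcat p q) (dconcat p q')"
  using eq
proof (induction rule: equivclp_induct)
  case (step y z)
  have "y 0 = q 0" using equivclp_ends[OF dsp step(1) q] by auto
  with step(2) e have "dhomotopic X d S (dconcat p y) (dconcat p z) \<or> dhomotopic X d S (dconcat p z) (dconcat p y)"
    using concat_dhomotopic[OF dsp dhomotopic_refl[OF dsp p]] dhomotopic_ends(3)[OF dsp] by metis
  with step(3) show ?case by (meson equivclp_into_equivclp)
qed simp

lemma dclass_mem: "q \<in> dclass X d S p \<Longrightarrow> dipath d S q \<and> q 0 = p 0 \<and> q 1 = p 1 \<and> equivclp (dhomotopic X d S) p q"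
  unfolding dclass_def by blast

lemma dclass_self: "dipath d S p \<Longrightarrow> p \<in> dclass X d S p"
  unfolding dclass_def by auto

lemma dclass_mem_eq: "q \<in> dclass X d S p \<Longrightarrow> dclass X d S q = dclass X d S p"
proof -
  assume q: "q \<in> dclass X d S p"
  then have e: "q 0 = p 0" "q 1 = p 1" "equivclp (dhomotopic X d S) p q" unfolding dclass_def by auto
  have "equivclp (dhomotopic X d S) q r = equivclp (dhomotopic X d S) p r" for r
    using e(3) equivclp_trans[of "dhomotopic X d S"] equivclp_sym[of "dhomotopic X d S"] by blast
  then show ?thesis unfolding dclass_def using e by auto
qed

lemma dclass_eqI:
  assumes "dipath d S a" "dipath d S b" "a 0 = b 0" "a 1 = b 1" "equivclp (dhomotopic X d S) a b"
  shows "dclass X d S a = dclass X d S b"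
proof -
  have "b \<in> dclass X d S a" using assms unfolding dclass_def by auto
  from dclass_mem_eq[OF this] show ?thesis by simp
qed

lemma reparam_class:
  assumes dsp: "dspace X d" and p: "dipath d S p" and rps: "reparam \<psi>" "reparam \<phi>"
    and e0: "\<psi> 0 = \<phi> 0" and e1: "\<psi> 1 = \<phi> 1"
  shows "dclass X d S (\<lambda>t. p (\<psi> t)) = dclass X d S (\<lambda>t. p (\<phi> t))"
  by (rule dclass_eqI[OF dipath_reparam[OF dsp p rps(1)] dipath_reparam[OF dsp p rps(2)]])
     (use e0 e1 reparam_equivclp[OF assms] in auto)

lemma dcomp_class:
  assumes dsp: "dspace X d" and p: "dipath d S p" and q: "dipath d S q" and e: "p 1 = q 0"
  shows "dcomp X d S (dclass X d S q) (dclass X d S p) = dclass X d S (dconcat p q)"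
proof -
  have "dclass X d S (dconcat p' q') = dclass X d S (dconcat p q)"
    if p': "p' \<in> dclass X d S p" and q': "q' \<in> dclass X d S q" for p' q'
  proof -
    have P: "dipath d S p'" "p' 0 = p 0" "p' 1 = p 1" "equivclp (dhomotopic X d S) p p'" using dclass_mem[OF p'] by auto
    have Q: "dipath d S q'" "q' 0 = q 0" "q' 1 = q 1" "equivclp (dhomotopic X d S) q q'" using dclass_mem[OF q'] by auto
    have "equivclp (dhomotopic X d S) (dconcat p q) (dconcat p' q)"
      by (rule concat_equivclp_left[OF dsp P(4) p q e])
    moreover have "equivclp (dhomotopic X d S) (dconcat p' q) (dconcat p' q')"
      by (rule concat_equivclp_right[OF dsp Q(4) P(1) q]) (use P e in simp)
    ultimately have E: "equivclp (dhomotopic X d S) (dconcat p q) (dconcat p' q')" by (rule equivclp_trans)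
    show ?thesis
      by (rule dclass_eqI[OF dipath_concat[OF dsp P(1) Q(1)] dipath_concat[OF dsp p q e]])
         (use P Q e E equivclp_sym in \<open>auto simp: dconcat_def\<close>)
  qed
  moreover have "p \<in> dclass X d S p" "q \<in> dclass X d S q" using dclass_self p q by auto
  ultimately show ?thesis unfolding dcomp_def by blast
qed

text \<open>The category laws.  Composites of morphisms are morphisms; associativity and
  the unit laws hold because the two sides are reparametrisations of each other.\<close>

lemma dmorE:
  assumes "dmor X d S a b f"
  obtains p where "dipath d S p" "p 0 = a" "p 1 = b" "f = dclass X d S p"
  using assms unfolding dmor_def by blast

lemma dmorI: "dipath d S p \<Longrightarrow> dmor X d S (p 0) (p 1) (dclass X d S p)"
  unfolding dmor_def by blast

lemma dmor_comp:
  assumes dsp: "dspace X d" and f: "dmor X d S a b f" and g: "dmor X d S b c g"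
  shows "dmor X d S a c (dcomp X d S g f)"
proof -
  obtain p where p: "dipath d S p" "p 0 = a" "p 1 = b" "f = dclass X d S p" by (rule dmorE[OF f])
  obtain q where q: "dipath d S q" "q 0 = b" "q 1 = c" "g = dclass X d S q" by (rule dmorE[OF g])
  have "dcomp X d S g f = dclass X d S (dconcat p q)" using dcomp_class[OF dsp p(1) q(1)] p q by simp
  moreover have "dipath d S (dconcat p q)" using dipath_concat[OF dsp p(1) q(1)] p q by simp
  ultimately show ?thesis unfolding dmor_def using p q by (intro exI[of _ "dconcat p q"]) (simp add: dconcat_def)
qed

text \<open>The reparametrisation relating \<open>(p \<cdot> q) \<cdot> r\<close> to \<open>p \<cdot> (q \<cdot> r)\<close>.\<close>

lemma reparam_assoc: "reparam (\<lambda>t. min (min (2*t) (t + 1/4)) ((t+1)/2))"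
  unfolding reparam_def
proof (intro conjI)
  show "continuous_on {0..1} (\<lambda>t. min (min (2*t) (t + 1/4)) ((t+1)/2::real))"
    by (intro continuous_on_min continuous_on_mult continuous_on_add continuous_on_divide continuous_on_const continuous_on_id) auto
  show "(\<lambda>t. min (min (2*t) (t + 1/4)) ((t+1)/2::real)) ` {0..1} \<subseteq> {0..1}"
    by (auto simp: min_def)
  show "mono_on {0..1} (\<lambda>t. min (min (2*t) (t + 1/4)) ((t+1)/2::real))"
    by (rule mono_onI) (intro min.mono; simp)
qed

lemma concat_assoc_eq:
  "dconcat (dconcat p q) r = (\<lambda>t. dconcat p (dconcat q r) (min (min (2*t) (t + 1/4)) ((t+1)/2)))"
proof (rule ext)
  fix t :: real
  consider "t \<le> 1/4" | "1/4 < t" "t \<le> 1/2" | "1/2 < t" by linarith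
  then show "dconcat (dconcat p q) r t = dconcat p (dconcat q r) (min (min (2*t) (t + 1/4)) ((t+1)/2))"
  proof cases
    case 1
    then have "min (min (2*t) (t + 1/4)) ((t+1)/2) = 2*t" by (simp add: min_def)
    then show ?thesis using 1 unfolding dconcat_def by simp
  next
    case 2
    then have "min (min (2*t) (t + 1/4)) ((t+1)/2) = t + 1/4" by (simp add: min_def)
    moreover have "2 * (t + 1/4) - 1 = 2*t - 1/2" "2 * (2*t - 1/2) = 2 * (2 * t) - 1" by simp_all
    ultimately show ?thesis using 2 unfolding dconcat_def by simp
  next
    case 3
    then have "min (min (2*t) (t + 1/4)) ((t+1)/2) = (t+1)/2" by (simp add: min_def)
    moreover have a3: "2 * ((t+1)/2) - 1 = t" by (simp add: field_simps)
    moreover have a1: "\<not> t \<le> 1/2" "\<not> (t+1)/2 \<le> 1/2" using 3 by simp_all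
    ultimately show ?thesis unfolding dconcat_def by (simp only: a1 a3 if_False)
  qed
qed

lemma dcomp_assoc:
  assumes dsp: "dspace X d" and f: "dmor X d S a b f" and g: "dmor X d S b c g" and h: "dmor X d S c e h"
  shows "dcomp X d S h (dcomp X d S g f) = dcomp X d S (dcomp X d S h g) f"
proof -
  obtain p where p: "dipath d S p" "p 0 = a" "p 1 = b" "f = dclass X d S p" by (rule dmorE[OF f])
  obtain q where q: "dipath d S q" "q 0 = b" "q 1 = c" "g = dclass X d S q" by (rule dmorE[OF g])
  obtain r where r: "dipath d S r" "r 0 = c" "r 1 = e" "h = dclass X d S r" by (rule dmorE[OF h])
  have pq: "dipath d S (dconcat p q)" using dipath_concat[OF dsp p(1) q(1)] p q by simp
  have qr: "dipath d S (dconcat q r)" using dipath_concat[OF dsp q(1) r(1)] q r by simp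
  have L: "dcomp X d S h (dcomp X d S g f) = dclass X d S (dconcat (dconcat p q) r)"
    using dcomp_class[OF dsp p(1) q(1)] dcomp_class[OF dsp pq r(1)] p q r by (simp add: dconcat_def)
  have R: "dcomp X d S (dcomp X d S h g) f = dclass X d S (dconcat p (dconcat q r))"
    using dcomp_class[OF dsp q(1) r(1)] dcomp_class[OF dsp p(1) qr] p q r by (simp add: dconcat_def)
  have pqr: "dipath d S (dconcat p (dconcat q r))" using dipath_concat[OF dsp p(1) qr] p q r by (simp add: dconcat_def)
  have "dclass X d S (\<lambda>t. dconcat p (dconcat q r) (min (min (2*t) (t + 1/4)) ((t+1)/2)))
      = dclass X d S (\<lambda>t. dconcat p (dconcat q r) t)"
    by (rule reparam_class[OF dsp pqr reparam_assoc reparam_id]) simp_all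
  then show ?thesis using L R concat_assoc_eq[of p q r] by simp
qed

text \<open>The reparametrisations relating \<open>const \<cdot> p\<close> and \<open>p \<cdot> const\<close> to \<open>p\<close>.\<close>

lemma reparam_idl: "reparam (\<lambda>t. max 0 (2*t - 1))"
  unfolding reparam_def
proof (intro conjI)
  show "continuous_on {0..1} (\<lambda>t. max 0 (2*t - 1::real))"
    by (intro continuous_on_max continuous_on_mult continuous_on_diff continuous_on_const continuous_on_id)
  show "(\<lambda>t. max 0 (2*t - 1::real)) ` {0..1} \<subseteq> {0..1}" by (auto simp: max_def)
  show "mono_on {0..1} (\<lambda>t. max 0 (2*t - 1::real))" by (rule mono_onI) (intro max.mono; simp)
qed

lemma reparam_idr: "reparam (\<lambda>t. min 1 (2*t))"
  unfolding reparam_def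
proof (intro conjI)
  show "continuous_on {0..1} (\<lambda>t. min 1 (2*t::real))"
    by (intro continuous_on_min continuous_on_mult continuous_on_const continuous_on_id)
  show "(\<lambda>t. min 1 (2*t::real)) ` {0..1} \<subseteq> {0..1}" by (auto simp: min_def)
  show "mono_on {0..1} (\<lambda>t. min 1 (2*t::real))" by (rule mono_onI) (intro min.mono; simp)
qed

lemma dcomp_id_left:
  assumes dsp: "dspace X d" and f: "dmor X d S a b f"
  shows "dcomp X d S (did X d S b) f = f"
proof -
  obtain p where p: "dipath d S p" "p 0 = a" "p 1 = b" "f = dclass X d S p" by (rule dmorE[OF f])
  have b: "dipath d S (\<lambda>t. b)" using dipath_const[OF dsp dipath_topspace[OF dsp p(1), of 1] dipath_in[OF p(1), of 1]] p by simp
  have "dcomp X d S (did X d S b) f = dclass X d S (dconcat p (\<lambda>t. b))"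
    unfolding did_def using dcomp_class[OF dsp p(1) b] p by simp
  also have "dconcat p (\<lambda>t. b) = (\<lambda>t. p (min 1 (2*t)))"
  proof (rule ext)
    fix t :: real
    show "dconcat p (\<lambda>t. b) t = p (min 1 (2*t))"
    proof (cases "t \<le> 1/2")
      case True
      then have "min 1 (2*t) = 2*t" by simp
      then show ?thesis unfolding dconcat_def using True by simp
    next
      case False
      then have "min 1 (2*t) = 1" by simp
      then show ?thesis unfolding dconcat_def using False p by simp
    qed
  qed
  also have "dclass X d S (\<lambda>t. p (min 1 (2*t))) = dclass X d S (\<lambda>t. p t)"
    by (rule reparam_class[OF dsp p(1) reparam_idr reparam_id]) simp_all
  finally show ?thesis using p by simp
qed

lemma dcomp_id_right:
  assumes dsp: "dspace X d" and f: "dmor X d S a b f"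
  shows "dcomp X d S f (did X d S a) = f"
proof -
  obtain p where p: "dipath d S p" "p 0 = a" "p 1 = b" "f = dclass X d S p" by (rule dmorE[OF f])
  have a: "dipath d S (\<lambda>t. a)" using dipath_const[OF dsp dipath_topspace[OF dsp p(1), of 0] dipath_in[OF p(1), of 0]] p by simp
  have "dcomp X d S f (did X d S a) = dclass X d S (dconcat (\<lambda>t. a) p)"
    unfolding did_def using dcomp_class[OF dsp a p(1)] p by simp
  also have "dconcat (\<lambda>t. a) p = (\<lambda>t. p (max 0 (2*t - 1)))"
  proof (rule ext)
    fix t :: real
    show "dconcat (\<lambda>t. a) p t = p (max 0 (2*t - 1))"
    proof (cases "t \<le> 1/2")
      case True
      then have "max 0 (2*t - 1) = 0" by simp
      then show ?thesis unfolding dconcat_def using True p by simp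
    next
      case False
      then have "max 0 (2*t - 1) = 2*t - 1" by simp
      then show ?thesis unfolding dconcat_def using False by simp
    qed
  qed
  also have "dclass X d S (\<lambda>t. p (max 0 (2*t - 1))) = dclass X d S (\<lambda>t. p t)"
    by (rule reparam_class[OF dsp p(1) reparam_idl reparam_id]) simp_all
  finally show ?thesis using p by simp
qed

lemma equivclp_mono_rel:
  assumes "equivclp r a b" and "\<And>x y. r x y \<Longrightarrow> s x y"
  shows "equivclp s a b"
  using assms(1)
proof (induction rule: equivclp_induct)
  case base then show ?case by simp
next
  case (step y z)
  then show ?case using assms(2) equivclp_into_equivclp by metis
qed

lemma dclass_sub: "S \<subseteq> Y \<Longrightarrow> q \<in> dclass X d S p \<Longrightarrow> q \<in> dclass X d Y p"
  unfolding dclass_def using dipath_mono equivclp_mono_rel[of "dhomotopic X d S" p q "dhomotopic X d Y"] dhomotopic_mono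
  by blast

lemma dincl_class:
  assumes SY: "S \<subseteq> Y" and p: "dipath d S p"
  shows "dincl X d Y (dclass X d S p) = dclass X d Y p"
proof -
  have "dclass X d Y q = dclass X d Y p" if "q \<in> dclass X d S p" for q
    using dclass_mem_eq[OF dclass_sub[OF SY that]] .
  moreover have "p \<in> dclass X d S p" by (rule dclass_self[OF p])
  ultimately show ?thesis unfolding dincl_def by blast
qed

lemma dmor_incl:
  assumes SY: "S \<subseteq> Y" and f: "dmor X d S a b f"
  shows "dmor X d Y a b (dincl X d Y f)"
proof -
  obtain p where p: "dipath d S p" "p 0 = a" "p 1 = b" "f = dclass X d S p" by (rule dmorE[OF f])
  show ?thesis unfolding dmor_def
    using dincl_class[OF SY p(1)] p dipath_mono[OF p(1) SY] by auto
qed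

lemma dincl_comp:
  assumes dsp: "dspace X d" and SY: "S \<subseteq> Y" and f: "dmor X d S a b f" and g: "dmor X d S b c g"
  shows "dincl X d Y (dcomp X d S g f) = dcomp X d Y (dincl X d Y g) (dincl X d Y f)"
proof -
  obtain p where p: "dipath d S p" "p 0 = a" "p 1 = b" "f = dclass X d S p" by (rule dmorE[OF f])
  obtain q where q: "dipath d S q" "q 0 = b" "q 1 = c" "g = dclass X d S q" by (rule dmorE[OF g])
  have pq: "dipath d S (dconcat p q)" using dipath_concat[OF dsp p(1) q(1)] p q by simp
  have "dincl X d Y (dcomp X d S g f) = dclass X d Y (dconcat p q)"
    using dcomp_class[OF dsp p(1) q(1)] p q dincl_class[OF SY pq] by simp
  moreover have "dcomp X d Y (dincl X d Y g) (dincl X d Y f) = dclass X d Y (dconcat p q)"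
    using dincl_class[OF SY p(1)] dincl_class[OF SY q(1)] p q
      dcomp_class[OF dsp dipath_mono[OF p(1) SY] dipath_mono[OF q(1) SY]] by simp
  ultimately show ?thesis by simp
qed

lemma dincl_did:
  assumes dsp: "dspace X d" and SY: "S \<subseteq> Y" and a: "a \<in> S" "a \<in> topspace X"
  shows "dincl X d Y (did X d S a) = did X d Y a"
  unfolding did_def by (rule dincl_class[OF SY dipath_const[OF dsp a(2) a(1)]])

lemma dincl_incl:
  assumes SY: "S \<subseteq> Y" and YZ: "Y \<subseteq> Z" and f: "dmor X d S a b f"
  shows "dincl X d Z (dincl X d Y f) = dincl X d Z f"
proof -
  obtain p where p: "dipath d S p" "p 0 = a" "p 1 = b" "f = dclass X d S p" by (rule dmorE[OF f])
  show ?thesis using dincl_class[OF SY p(1)] dincl_class[OF order_trans[OF SY YZ] p(1)]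
      dincl_class[OF YZ dipath_mono[OF p(1) SY]] p by simp
qed

definition sub :: "(real \<Rightarrow> 'a) \<Rightarrow> real \<Rightarrow> real \<Rightarrow> real \<Rightarrow> 'a" where
  "sub g a b = (\<lambda>t. g (a + (b - a) * t))"

lemma sub_dipath:
  assumes dsp: "dspace X d" and g: "dipath d S g" and T: "g ` {a..b} \<subseteq> T" and ab: "0 \<le> a" "a \<le> b" "b \<le> 1"
  shows "dipath d T (sub g a b)"
proof -
  have "dipath d S (sub g a b)"
    unfolding sub_def by (rule dipath_reparam[OF dsp g reparam_affine[OF ab]])
  moreover have "sub g a b t \<in> T" if "t \<in> {0..1}" for t
    using affine_in_interval[OF ab(2) that] T unfolding sub_def by blast
  ultimately show ?thesis unfolding dipath_def by blast
qed

lemma sub_ends: "sub g a b 0 = g a" "sub g a b 1 = g b"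
  unfolding sub_def by simp_all

lemma reparam_split:
  assumes ab: "0 \<le> a" "a \<le> b" "b \<le> c" "c \<le> (1::real)"
  shows "reparam (\<lambda>t. a + (b-a) * min 1 (2*t) + (c-b) * max 0 (2*t-1))"
  unfolding reparam_def
proof (intro conjI)
  show "continuous_on {0..1} (\<lambda>t. a + (b-a) * min 1 (2*t) + (c-b) * max 0 (2*t-1))"
    by (intro continuous_on_add continuous_on_mult continuous_on_min continuous_on_max continuous_on_diff continuous_on_const continuous_on_id)
  show "(\<lambda>t. a + (b-a) * min 1 (2*t) + (c-b) * max 0 (2*t-1)) ` {0..1} \<subseteq> {0..1}"
  proof (rule image_subsetI)
    fix t :: real assume t: "t \<in> {0..1}"
    have m1: "0 \<le> min 1 (2*t)" "min 1 (2*t) \<le> 1" using t by auto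
    have m2: "0 \<le> max 0 (2*t-1)" "max 0 (2*t-1) \<le> 1" using t by auto
    have "(b-a) * min 1 (2*t) \<le> (b-a)*1" using m1 ab by (intro mult_left_mono) auto
    moreover have "(c-b) * max 0 (2*t-1) \<le> (c-b)*1" using m2 ab by (intro mult_left_mono) auto
    moreover have "0 \<le> (b-a) * min 1 (2*t)" "0 \<le> (c-b) * max 0 (2*t-1)" using m1 m2 ab by auto
    ultimately show "a + (b-a) * min 1 (2*t) + (c-b) * max 0 (2*t-1) \<in> {0..1}" using ab by auto
  qed
  show "mono_on {0..1} (\<lambda>t. a + (b-a) * min 1 (2*t) + (c-b) * max 0 (2*t-1))"
  proof (rule mono_onI)
    fix x y :: real assume "x \<in> {0..1}" "y \<in> {0..1}" "x \<le> y"
    then have "min 1 (2*x) \<le> min 1 (2*y)" "max 0 (2*x-1) \<le> max 0 (2*y-1)" by auto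
    then have "(b-a) * min 1 (2*x) \<le> (b-a) * min 1 (2*y)" "(c-b) * max 0 (2*x-1) \<le> (c-b) * max 0 (2*y-1)"
      using ab by (auto intro: mult_left_mono)
    then show "a + (b-a) * min 1 (2*x) + (c-b) * max 0 (2*x-1) \<le> a + (b-a) * min 1 (2*y) + (c-b) * max 0 (2*y-1)"
      by linarith
  qed
qed

lemma sub_split_eq:
  "dconcat (sub g a b) (sub g b c) = (\<lambda>t. g (a + (b-a) * min 1 (2*t) + (c-b) * max 0 (2*t-1)))"
proof (rule ext)
  fix t :: real
  show "dconcat (sub g a b) (sub g b c) t = g (a + (b-a) * min 1 (2*t) + (c-b) * max 0 (2*t-1))"
  proof (cases "t \<le> 1/2")
    case True
    then have "min 1 (2*t) = 2*t" "max 0 (2*t-1) = 0" by simp_all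
    then show ?thesis unfolding dconcat_def sub_def using True by simp
  next
    case False
    then have "min 1 (2*t) = 1" "max 0 (2*t-1) = 2*t-1" by simp_all
    moreover have "a + (b-a) * 1 + (c-b) * (2*t-1) = b + (c-b) * (2*t-1)" by simp
    ultimately show ?thesis unfolding dconcat_def sub_def using False by simp
  qed
qed

lemma sub_split:
  assumes dsp: "dspace X d" and g: "dipath d S g" and ab: "0 \<le> a" "a \<le> b" "b \<le> c" "c \<le> 1"
  shows "dcomp X d S (dclass X d S (sub g b c)) (dclass X d S (sub g a b)) = dclass X d S (sub g a c)"
proof -
  have s1: "dipath d S (sub g a b)" by (rule sub_dipath[OF dsp g _ ab(1,2)]) (use g ab in \<open>auto simp: dipath_def\<close>)
  have s2: "dipath d S (sub g b c)" by (rule sub_dipath[OF dsp g _ _ ab(3,4)]) (use g ab in \<open>auto simp: dipath_def\<close>)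
  have "dcomp X d S (dclass X d S (sub g b c)) (dclass X d S (sub g a b)) = dclass X d S (dconcat (sub g a b) (sub g b c))"
    by (rule dcomp_class[OF dsp s1 s2]) (simp add: sub_ends)
  also have "\<dots> = dclass X d S (\<lambda>t. g (a + (b-a) * min 1 (2*t) + (c-b) * max 0 (2*t-1)))"
    by (simp only: sub_split_eq)
  also have "\<dots> = dclass X d S (\<lambda>t. g (a + (c - a) * t))"
    by (rule reparam_class[OF dsp g reparam_split[OF ab] reparam_affine]) (use ab in simp_all)
  finally show ?thesis unfolding sub_def .
qed

lemma did_dmor_eq:
  assumes dsp: "dspace X d" and a: "a \<in> topspace X" "a \<in> S" and m: "dmor X d S a b (did X d S a)"
  shows "b = a"
proof -
  obtain p where p: "dipath d S p" "p 0 = a" "p 1 = b" "did X d S a = dclass X d S p" by (rule dmorE[OF m])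
  have "p \<in> dclass X d S (\<lambda>t. a)" using dclass_self[OF p(1)] p(4) unfolding did_def by simp
  then show ?thesis using dclass_mem p by fastforce
qed

lemma did_dmor: "dspace X d \<Longrightarrow> a \<in> topspace X \<Longrightarrow> a \<in> S \<Longrightarrow> dmor X d S a a (did X d S a)"
  unfolding did_def using dmorI[OF dipath_const, of X d a S] by simp

lemma dfunctorD:
  assumes "dfunctor X d S1 T1 S2 T2 Fo Fm"
  shows "x \<in> T1 \<Longrightarrow> Fo x \<in> T2"
    and "x \<in> T1 \<Longrightarrow> y \<in> T1 \<Longrightarrow> dmor X d S1 x y f \<Longrightarrow> dmor X d S2 (Fo x) (Fo y) (Fm f)"
    and "x \<in> T1 \<Longrightarrow> Fm (did X d S1 x) = did X d S2 (Fo x)"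
    and "x \<in> T1 \<Longrightarrow> y \<in> T1 \<Longrightarrow> z \<in> T1 \<Longrightarrow> dmor X d S1 x y f \<Longrightarrow> dmor X d S1 y z g \<Longrightarrow>
         Fm (dcomp X d S1 g f) = dcomp X d S2 (Fm g) (Fm f)"
  using assms unfolding dfunctor_def by simp_all

lemma future_retractD:
  assumes "future_retract X d S A B Po Pm eta"
  shows "A \<subseteq> B" "B \<subseteq> S" "dfunctor X d S B S A Po Pm"
    and "x \<in> B \<Longrightarrow> dmor X d S x (Po x) (eta x)"
    and "x \<in> B \<Longrightarrow> y \<in> B \<Longrightarrow> dmor X d S x y f \<Longrightarrow> dcomp X d S (eta y) f = dcomp X d S (Pm f) (eta x)"
    and "a \<in> A \<Longrightarrow> eta a = did X d S a"
  using assms unfolding future_retract_def by simp_all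

lemma future_retract_fixes:
  assumes dsp: "dspace X d" and S: "S \<subseteq> topspace X"
    and P: "future_retract X d S A B Po Pm eta" and a: "a \<in> A"
  shows "Po a = a"
proof -
  have "a \<in> S" using future_retractD(1,2)[OF P] a by blast
  moreover have "dmor X d S a (Po a) (did X d S a)"
    using future_retractD(1,4,6)[OF P] a by force
  ultimately show ?thesis using did_dmor_eq[OF dsp] S by blast
qed

lemma future_retract_natural_incl:
  assumes dsp: "dspace X d" and ST: "S \<subseteq> T" and P: "future_retract X d S A B Po Pm eta"
    and x: "x \<in> B" and y: "y \<in> B" and g: "dmor X d S x y g"
  shows "dcomp X d T (dincl X d T (eta y)) (dincl X d T g)
       = dcomp X d T (dincl X d T (Pm g)) (dincl X d T (eta x))"
proof -
  have ex: "dmor X d S x (Po x) (eta x)" and ey: "dmor X d S y (Po y) (eta y)"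
    using future_retractD(4)[OF P] x y by auto
  have Pg: "dmor X d S (Po x) (Po y) (Pm g)"
    using dfunctorD(2)[OF future_retractD(3)[OF P] x y g] .
  have "dcomp X d T (dincl X d T (eta y)) (dincl X d T g) = dincl X d T (dcomp X d S (eta y) g)"
    using dincl_comp[OF dsp ST g ey] by simp
  also have "\<dots> = dincl X d T (dcomp X d S (Pm g) (eta x))"
    using future_retractD(5)[OF P x y g] by simp
  also have "\<dots> = dcomp X d T (dincl X d T (Pm g)) (dincl X d T (eta x))"
    using dincl_comp[OF dsp ST ex Pg] .
  finally show ?thesis .
qed

inductive piecewise :: "'a topology \<Rightarrow> ((real \<Rightarrow> 'a) \<Rightarrow> bool) \<Rightarrow> 'i set \<Rightarrow> ('i \<Rightarrow> 'a set)
    \<Rightarrow> ('i \<Rightarrow> 'a set) \<Rightarrow> 'a \<Rightarrow> 'a \<Rightarrow> (real \<Rightarrow> 'a) set \<Rightarrow> bool"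
  for X d I Xs Bs where
  piecewise_id: "k \<in> I \<Longrightarrow> x \<in> Bs k \<Longrightarrow> piecewise X d I Xs Bs x x (did X d (topspace X) x)"
| piecewise_step: "piecewise X d I Xs Bs x w h \<Longrightarrow> k \<in> I \<Longrightarrow> w \<in> Bs k \<Longrightarrow> w' \<in> Bs k \<Longrightarrow>
    dmor X d (Xs k) w w' g \<Longrightarrow>
    piecewise X d I Xs Bs x w' (dcomp X d (topspace X) (dincl X d (topspace X) g) h)"

lemma piecewise_dmor:
  assumes dsp: "dspace X d" and XB: "\<And>k. k \<in> I \<Longrightarrow> Bs k \<subseteq> Xs k \<and> Xs k \<subseteq> topspace X"
    and f: "piecewise X d I Xs Bs x y f"
  shows "dmor X d (topspace X) x y f"
  using f
proof induction
  case (piecewise_id k x)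
  then show ?case using did_dmor[OF dsp] XB by blast
next
  case (piecewise_step x w h k w' g)
  then show ?case using dmor_comp[OF dsp] dmor_incl XB by meson
qed

lemma paste_squares:
  assumes dsp: "dspace X d"
    and h: "dmor X d S x w h" and g: "dmor X d S w w' g"
    and ex: "dmor X d S x a ex" and ew: "dmor X d S w b ew" and ew': "dmor X d S w' b' ew'"
    and Ph: "dmor X d S a b Ph" and Pg: "dmor X d S b b' Pg"
    and left: "dcomp X d S ew h = dcomp X d S Ph ex"
    and right: "dcomp X d S ew' g = dcomp X d S Pg ew"
  shows "dcomp X d S ew' (dcomp X d S g h) = dcomp X d S (dcomp X d S Pg Ph) ex"
proof -
  have "dcomp X d S ew' (dcomp X d S g h) = dcomp X d S (dcomp X d S Pg ew) h"
    using dcomp_assoc[OF dsp h g ew'] right by simp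
  also have "\<dots> = dcomp X d S Pg (dcomp X d S Ph ex)"
    using dcomp_assoc[OF dsp h ew Pg] left by simp
  also have "\<dots> = dcomp X d S (dcomp X d S Pg Ph) ex"
    using dcomp_assoc[OF dsp ex Ph Pg] .
  finally show ?thesis .
qed

text \<open>Naturality of the glued units with respect to the glued functor \<open>P\<close>, along
  piecewise morphisms: each piece is handled by the naturality of the unit of one
  \<open>P\<^sub>k\<close>, and the pieces are pasted together.\<close>

lemma piecewise_natural:
  assumes dsp: "dspace X d"
    and XT: "\<And>k. k \<in> I \<Longrightarrow> Xs k \<subseteq> topspace X"
    and Pfr: "\<And>k. k \<in> I \<Longrightarrow> future_retract X d (Xs k) (As k) (Bs k) (Po k) (Pm k) (eta k)"
    and BB: "\<And>k. k \<in> I \<Longrightarrow> Bs k \<subseteq> B"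
    and PP: "dfunctor X d (topspace X) B (topspace X) A PPo PPm"
    and PPobj: "\<And>k x. k \<in> I \<Longrightarrow> x \<in> Bs k \<Longrightarrow> PPo x = Po k x"
    and PPmor: "\<And>k x y f. k \<in> I \<Longrightarrow> x \<in> Bs k \<Longrightarrow> y \<in> Bs k \<Longrightarrow> dmor X d (Xs k) x y f \<Longrightarrow>
                 PPm (dincl X d (topspace X) f) = dincl X d (topspace X) (Pm k f)"
    and agree: "\<And>k l x. k \<in> I \<Longrightarrow> l \<in> I \<Longrightarrow> x \<in> Bs k \<Longrightarrow> x \<in> Bs l \<Longrightarrow>
                 dincl X d (topspace X) (eta k x) = dincl X d (topspace X) (eta l x)"
    and f: "piecewise X d I Xs Bs x y f"
    and k: "k \<in> I" "x \<in> Bs k" and l: "l \<in> I" "y \<in> Bs l"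
  shows "dcomp X d (topspace X) (dincl X d (topspace X) (eta l y)) f
       = dcomp X d (topspace X) (PPm f) (dincl X d (topspace X) (eta k x))"
proof -
  let ?T = "topspace X" and ?i = "dincl X d (topspace X)"
  have XB: "Bs j \<subseteq> Xs j \<and> Xs j \<subseteq> ?T" if "j \<in> I" for j
    using future_retractD(2)[OF Pfr[OF that]] XT[OF that] by blast
  have unit: "dmor X d ?T z (Po j z) (?i (eta j z))" if "j \<in> I" "z \<in> Bs j" for j z
    using dmor_incl[OF XT future_retractD(4)[OF Pfr]] that by blast
  from f k l show ?thesis
  proof (induction arbitrary: l)
    case (piecewise_id j x)
    then have xk: "x \<in> Bs k" and xl: "x \<in> Bs l" and lI: "l \<in> I" by auto
    have ek: "dmor X d ?T x (Po k x) (?i (eta k x))" by (rule unit[OF k(1) xk])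
    have el: "dmor X d ?T x (Po l x) (?i (eta l x))" by (rule unit[OF lI xl])
    have "PPm (did X d ?T x) = did X d ?T (Po k x)"
      using dfunctorD(3)[OF PP, of x] BB[OF k(1)] xk PPobj[OF k(1) xk] by auto
    then have "dcomp X d ?T (PPm (did X d ?T x)) (?i (eta k x)) = ?i (eta k x)"
      using dcomp_id_left[OF dsp ek] by simp
    moreover have "dcomp X d ?T (?i (eta l x)) (did X d ?T x) = ?i (eta l x)"
      using dcomp_id_right[OF dsp el] .
    ultimately show ?case using agree[OF lI k(1) xl xk] by simp
    next
    case (piecewise_step x w h j w' g)
    then have xk: "x \<in> Bs k" and lI: "l \<in> I" and w'l: "w' \<in> Bs l"
      and jI: "j \<in> I" and w: "w \<in> Bs j" and w': "w' \<in> Bs j" and g0: "dmor X d (Xs j) w w' g"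
      by auto
    have h: "dmor X d ?T x w h" by (rule piecewise_dmor[OF dsp XB piecewise_step.hyps(1)])
    have g: "dmor X d ?T w w' (?i g)" by (rule dmor_incl[OF XT[OF jI] g0])
    have B: "x \<in> B" "w \<in> B" "w' \<in> B" using BB[OF k(1)] BB[OF jI] xk w w' by blast+
    have Ph: "dmor X d ?T (Po k x) (Po j w) (PPm h)"
      using dfunctorD(2)[OF PP B(1,2) h] PPobj[OF k(1) xk] PPobj[OF jI w] by simp
    have Pg: "dmor X d ?T (Po j w) (Po j w') (?i (Pm j g))"
      by (rule dmor_incl[OF XT[OF jI] dfunctorD(2)[OF future_retractD(3)[OF Pfr[OF jI]] w w' g0]])
    have "dcomp X d ?T (?i (eta j w')) (dcomp X d ?T (?i g) h)
        = dcomp X d ?T (dcomp X d ?T (?i (Pm j g)) (PPm h)) (?i (eta k x))"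
    proof (rule paste_squares[OF dsp h g unit[OF k(1) xk] unit[OF jI w] unit[OF jI w'] Ph Pg])
      show "dcomp X d ?T (?i (eta j w)) h = dcomp X d ?T (PPm h) (?i (eta k x))"
        by (rule piecewise_step.IH[OF k(1) xk jI w])
      show "dcomp X d ?T (?i (eta j w')) (?i g) = dcomp X d ?T (?i (Pm j g)) (?i (eta j w))"
        by (rule future_retract_natural_incl[OF dsp XT[OF jI] Pfr[OF jI] w w' g0])
    qed
    moreover have "dcomp X d ?T (?i (Pm j g)) (PPm h) = PPm (dcomp X d ?T (?i g) h)"
      using dfunctorD(4)[OF PP B h g] PPmor[OF jI w w' g0] by simp
    ultimately show ?case using agree[OF lI jI w'l w'] by simp
  qed
qed

lemma future_retract_unit_extend:
  assumes dsp: "dspace X d" and S: "S \<subseteq> topspace X"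
    and Q: "future_retract X d S B S Qo Qm theta"
    and c: "dmor X d (topspace X) x z c" and g: "dmor X d S z z' g" and z: "z \<in> S" "z' \<in> S"
  shows "dcomp X d (topspace X) (dincl X d (topspace X) (theta z'))
           (dcomp X d (topspace X) (dincl X d (topspace X) g) c)
       = dcomp X d (topspace X) (dincl X d (topspace X) (Qm g))
           (dcomp X d (topspace X) (dincl X d (topspace X) (theta z)) c)"
proof -
  let ?T = "topspace X" and ?i = "dincl X d (topspace X)"
  have th: "dmor X d ?T v (Qo v) (?i (theta v))" if "v \<in> S" for v
    by (rule dmor_incl[OF S future_retractD(4)[OF Q that]])
  have gT: "dmor X d ?T z z' (?i g)" by (rule dmor_incl[OF S g])
  have Qg: "dmor X d ?T (Qo z) (Qo z') (?i (Qm g))"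
    by (rule dmor_incl[OF S dfunctorD(2)[OF future_retractD(3)[OF Q] z g]])
  have "dcomp X d ?T (?i (theta z')) (dcomp X d ?T (?i g) c)
      = dcomp X d ?T (dcomp X d ?T (?i (theta z')) (?i g)) c"
    by (rule dcomp_assoc[OF dsp c gT th[OF z(2)]])
  also have "\<dots> = dcomp X d ?T (dcomp X d ?T (?i (Qm g)) (?i (theta z))) c"
    using future_retract_natural_incl[OF dsp S Q z g] by simp
  also have "\<dots> = dcomp X d ?T (?i (Qm g)) (dcomp X d ?T (?i (theta z)) c)"
    by (rule dcomp_assoc[OF dsp c th[OF z(1)] Qg, symmetric])
  finally show ?thesis .
qed

lemma subdivision_mono:
  fixes t :: "nat \<Rightarrow> real"
  assumes step: "\<forall>i<n. t i \<le> t (Suc i)" and ij: "i \<le> j" "j \<le> n"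
  shows "t i \<le> t j"
  using ij
proof (induction j)
  case (Suc j)
  then show ?case using step by (cases "i = Suc j") (auto simp: le_Suc_eq intro: order_trans)
qed simp

text \<open>These retracts
  move every dipath of \<open>X\<close>, piece by piece, into the objects \<open>\<Union>B\<^sub>k\<close>.\<close>

locale compatible_retracts =
  fixes X :: "'a topology" and d :: "(real \<Rightarrow> 'a) \<Rightarrow> bool" and I :: "'i set"
    and Xs Bs :: "'i \<Rightarrow> 'a set"
    and Qo :: "'i \<Rightarrow> 'a \<Rightarrow> 'a" and Qm :: "'i \<Rightarrow> (real \<Rightarrow> 'a) set \<Rightarrow> (real \<Rightarrow> 'a) set"
    and theta :: "'i \<Rightarrow> 'a \<Rightarrow> (real \<Rightarrow> 'a) set"
  assumes dsp: "dspace X d"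
    and Xs_sub: "\<And>k. k \<in> I \<Longrightarrow> Xs k \<subseteq> topspace X"
    and retract: "\<And>k. k \<in> I \<Longrightarrow> future_retract X d (Xs k) (Bs k) (Xs k) (Qo k) (Qm k) (theta k)"
    and agree: "\<And>k l z. k \<in> I \<Longrightarrow> l \<in> I \<Longrightarrow> z \<in> Xs k \<Longrightarrow> z \<in> Xs l \<Longrightarrow>
       Qo k z = Qo l z \<and> dincl X d (topspace X) (theta k z) = dincl X d (topspace X) (theta l z)"
    and meet: "\<And>k l z. k \<in> I \<Longrightarrow> l \<in> I \<Longrightarrow> z \<in> Xs k \<Longrightarrow> z \<in> Bs l \<Longrightarrow> z \<in> Bs k"
begin

definition retracted :: "'a \<Rightarrow> 'a \<Rightarrow> (real \<Rightarrow> 'a) set \<Rightarrow> bool" where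
  "retracted x z c \<longleftrightarrow> (\<exists>w h. piecewise X d I Xs Bs x w h \<and>
     (\<forall>k\<in>I. z \<in> Xs k \<longrightarrow> Qo k z = w \<and>
        dcomp X d (topspace X) (dincl X d (topspace X) (theta k z)) c = h))"

lemma retract_fixes:
  assumes k: "k \<in> I" and z: "z \<in> Xs k" "z \<in> Bs l" and l: "l \<in> I"
  shows "Qo k z = z" "dincl X d (topspace X) (theta k z) = did X d (topspace X) z"
proof -
  have zk: "z \<in> Bs k" by (rule meet[OF k l z])
  show "Qo k z = z" by (rule future_retract_fixes[OF dsp Xs_sub[OF k] retract[OF k] zk])
  show "dincl X d (topspace X) (theta k z) = did X d (topspace X) z"
    using future_retractD(6)[OF retract[OF k] zk] dincl_did[OF dsp Xs_sub[OF k] z(1)] Xs_sub[OF k] z(1)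
    by auto
qed

lemma retracted_id:
  assumes l: "l \<in> I" and x: "x \<in> Bs l"
  shows "retracted x x (did X d (topspace X) x)"
proof -
  have xT: "x \<in> topspace X" using x Xs_sub[OF l] future_retractD(1)[OF retract[OF l]] by blast
  have "dcomp X d (topspace X) (did X d (topspace X) x) (did X d (topspace X) x) = did X d (topspace X) x"
    by (rule dcomp_id_left[OF dsp did_dmor[OF dsp xT xT]])
  then show ?thesis
    unfolding retracted_def using piecewise_id[where I=I and Bs=Bs, OF l x] retract_fixes[OF _ _ x l] by metis
qed

lemma retracted_extend:
  assumes r: "retracted x z c" and c: "dmor X d (topspace X) x z c"
    and k: "k \<in> I" and g: "dmor X d (Xs k) z z' g" and z: "z \<in> Xs k" "z' \<in> Xs k"
  shows "retracted x z' (dcomp X d (topspace X) (dincl X d (topspace X) g) c)"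
proof -
  let ?T = "topspace X" and ?i = "dincl X d (topspace X)"
  obtain w h where h: "piecewise X d I Xs Bs x w h" and w: "Qo k z = w"
    and hz: "dcomp X d ?T (?i (theta k z)) c = h"
    using r k z(1) unfolding retracted_def by blast
  have Q: "dfunctor X d (Xs k) (Xs k) (Xs k) (Bs k) (Qo k) (Qm k)"
    by (rule future_retractD(3)[OF retract[OF k]])
  have "piecewise X d I Xs Bs x (Qo k z') (dcomp X d ?T (?i (Qm k g)) h)"
    by (rule piecewise_step[OF h k]) (use dfunctorD(1,2)[OF Q] z g w in auto)
  moreover have "dcomp X d ?T (?i (theta k z')) (dcomp X d ?T (?i g) c) = dcomp X d ?T (?i (Qm k g)) h"
    using future_retract_unit_extend[OF dsp Xs_sub[OF k] retract[OF k] c g z] hz by simp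
  ultimately show ?thesis
    unfolding retracted_def using agree[OF _ k _ z(2)] by metis
qed

lemma retracted_piecewise:
  assumes r: "retracted x y c" and c: "dmor X d (topspace X) x y c"
    and l: "l \<in> I" and y: "y \<in> Bs l"
  shows "piecewise X d I Xs Bs x y c"
proof -
  have yX: "y \<in> Xs l" using future_retractD(1)[OF retract[OF l]] y by blast
  obtain w h where "piecewise X d I Xs Bs x w h" "Qo l y = w"
    "dcomp X d (topspace X) (dincl X d (topspace X) (theta l y)) c = h"
    using r l yX unfolding retracted_def by blast
  then show ?thesis
    using retract_fixes[OF l yX y l] dcomp_id_left[OF dsp c] by simp
qed

text \<open>Every morphism between objects of \<open>\<Union>B\<^sub>k\<close> is piecewise, provided every dipath
  of \<open>X\<close> can be subdivided into pieces each lying in some \<open>X\<^sub>k\<close>: retract the prefixes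
  of a representing dipath, one piece at a time.\<close>

lemma dmor_piecewise:
  assumes subdiv: "\<And>p. d p \<Longrightarrow> \<exists>n t. t 0 = 0 \<and> t n = 1 \<and> (\<forall>i<n. t i \<le> t (Suc i)) \<and>
                     (\<forall>i<n. \<exists>k\<in>I. p ` {t i..t (Suc i)} \<subseteq> Xs k)"
    and f: "dmor X d (topspace X) x y f"
    and x: "kx \<in> I" "x \<in> Bs kx" and y: "ky \<in> I" "y \<in> Bs ky"
  shows "piecewise X d I Xs Bs x y f"
proof -
  let ?T = "topspace X"
  obtain \<gamma> where \<gamma>: "dipath d ?T \<gamma>" "\<gamma> 0 = x" "\<gamma> 1 = y" "f = dclass X d ?T \<gamma>"
    by (rule dmorE[OF f])
  have "d \<gamma>" using \<gamma>(1) unfolding dipath_def by blast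
  then obtain n and t :: "nat \<Rightarrow> real" where t0: "t 0 = 0" and tn: "t n = 1"
    and step: "\<forall>i<n. t i \<le> t (Suc i)" and pieces: "\<forall>i<n. \<exists>k\<in>I. \<gamma> ` {t i..t (Suc i)} \<subseteq> Xs k"
    using subdiv by blast
  have t01: "0 \<le> t i" "t i \<le> 1" if "i \<le> n" for i
    using subdivision_mono[OF step, of 0 i] subdivision_mono[OF step, of i n] that t0 tn by auto
  have prefix: "dmor X d ?T x (\<gamma> (t m)) (dclass X d ?T (sub \<gamma> 0 (t m)))" if "m \<le> n" for m
  proof -
    have "dipath d ?T (sub \<gamma> 0 (t m))"
      by (rule sub_dipath[OF dsp \<gamma>(1)]) (use \<gamma>(1) t01[OF that] in \<open>auto simp: dipath_def\<close>)
    from dmorI[OF this] show ?thesis using \<gamma>(2) by (simp add: sub_ends)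
  qed
  have "retracted x (\<gamma> (t m)) (dclass X d ?T (sub \<gamma> 0 (t m)))" if "m \<le> n" for m
    using that
  proof (induction m)
    case 0
    have "sub \<gamma> 0 0 = (\<lambda>s. x)" using \<gamma>(2) by (simp add: sub_def)
    then show ?case using retracted_id[OF x] t0 \<gamma>(2) by (simp add: did_def)
  next
    case (Suc m)
    obtain k where k: "k \<in> I" and piece: "\<gamma> ` {t m..t (Suc m)} \<subseteq> Xs k"
      using pieces Suc.prems Suc_le_eq by blast
    have tm: "0 \<le> t m" "t m \<le> t (Suc m)" "t (Suc m) \<le> 1"
      using t01[of m] t01[of "Suc m"] step Suc.prems by auto
    have g: "dipath d (Xs k) (sub \<gamma> (t m) (t (Suc m)))"
      by (rule sub_dipath[OF dsp \<gamma>(1) piece tm])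
    have "dclass X d ?T (sub \<gamma> 0 (t (Suc m)))
        = dcomp X d ?T (dincl X d ?T (dclass X d (Xs k) (sub \<gamma> (t m) (t (Suc m)))))
            (dclass X d ?T (sub \<gamma> 0 (t m)))"
      using sub_split[OF dsp \<gamma>(1) order_refl tm] dincl_class[OF Xs_sub[OF k] g] by simp
    moreover have "retracted x (\<gamma> (t (Suc m))) \<dots>"
    proof (rule retracted_extend[OF Suc.IH prefix k])
      show "m \<le> n" "m \<le> n" using Suc.prems by simp_all
      show "dmor X d (Xs k) (\<gamma> (t m)) (\<gamma> (t (Suc m))) (dclass X d (Xs k) (sub \<gamma> (t m) (t (Suc m))))"
        using dmorI[OF g] by (simp add: sub_ends)
      show "\<gamma> (t m) \<in> Xs k" "\<gamma> (t (Suc m)) \<in> Xs k" using piece tm by auto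
    qed
    ultimately show ?case by simp
  qed
  from this[of n] have "retracted x y f"
    using tn \<gamma>(3,4) by (simp add: sub_def)
  then show ?thesis by (rule retracted_piecewise[OF _ f y])
qed

end

text \<open>Compatibility of the retracts \<open>Q\<^sub>k\<close> forces \<open>B \<inter> X\<^sub>k = B\<^sub>k\<close>: if \<open>y \<in> X\<^sub>0\<close> is an
  object of \<open>B\<close> for the bigger retract \<open>Q\<close>, its unit there is the identity, hence so is
  the unit of the smaller retract \<open>Q\<^sub>0\<close>, and \<open>y = Q\<^sub>0(y) \<in> B\<^sub>0\<close>.\<close>

lemma compatible_retract_fixed:
  assumes dsp: "dspace X d" and S0S: "S0 \<subseteq> S" and S: "S \<subseteq> topspace X"
    and Q0: "future_retract X d S0 B0 S0 Qo0 Qm0 theta0"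
    and Q: "future_retract X d S B S Qo Qm theta"
    and y: "y \<in> S0" "y \<in> B" and unit: "theta y = dincl X d S (theta0 y)"
  shows "y \<in> B0"
proof -
  have "dmor X d S y (Qo0 y) (theta y)"
    using dmor_incl[OF S0S future_retractD(4)[OF Q0 y(1)]] unit by simp
  then have "dmor X d S y (Qo0 y) (did X d S y)"
    using future_retractD(6)[OF Q y(2)] by simp
  then have "Qo0 y = y" using did_dmor_eq[OF dsp] S S0S y(1) by blast
  then show ?thesis using dfunctorD(1)[OF future_retractD(3)[OF Q0] y(1)] by simp
qed

text \<open>Units of two compatible retracts agree, after inclusion into \<open>T\<close>, on the objects
  they share: both are images of the unit of the retract on the intersection.\<close>

lemma compatible_units_agree:
  assumes S0: "S 0 = S 1 \<inter> S 2"
    and X0k: "\<And>k. k \<in> {1,2} \<Longrightarrow> Xs 0 \<subseteq> Xs k" and XT: "\<And>k. k \<in> {1,2} \<Longrightarrow> Xs k \<subseteq> T"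
    and unit0: "\<And>x. x \<in> S 0 \<Longrightarrow> dmor X d (Xs 0) x (F x) (u 0 x)"
    and unit: "\<And>k x. k \<in> {1,2} \<Longrightarrow> x \<in> S 0 \<Longrightarrow> u k x = dincl X d (Xs k) (u 0 x)"
    and k: "k \<in> {1,2::nat}" "x \<in> S k" and l: "l \<in> {1,2}" "x \<in> S l"
  shows "dincl X d T (u k x) = dincl X d T (u l x)"
proof (cases "k = l")
  case False
  then have x0: "x \<in> S 0" using S0 k l by auto
  have "dincl X d T (u j x) = dincl X d T (u 0 x)" if "j \<in> {1,2}" for j
    using unit[OF that x0] dincl_incl[OF X0k[OF that] XT[OF that] unit0[OF x0]] by simp
  then show ?thesis using k l by simp
qed simp

lemma compatible_retracts_of_cover:
  fixes Xs Bs :: "nat \<Rightarrow> 'a set"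
  assumes dsp: "dspace X d" and XT: "\<And>k. k \<in> {1,2} \<Longrightarrow> Xs k \<subseteq> topspace X"
    and X0: "Xs 0 = Xs 1 \<inter> Xs 2" and B0: "Bs 0 = Bs 1 \<inter> Bs 2"
    and Qfr: "\<And>k. k \<in> {0,1,2} \<Longrightarrow> future_retract X d (Xs k) (Bs k) (Xs k) (Qo k) (Qm k) (theta k)"
    and Qobj: "\<And>k x. k \<in> {1,2} \<Longrightarrow> x \<in> Xs 0 \<Longrightarrow> Qo k x = Qo 0 x"
    and Qunit: "\<And>k x. k \<in> {1,2} \<Longrightarrow> x \<in> Xs 0 \<Longrightarrow> theta k x = dincl X d (Xs k) (theta 0 x)"
  shows "compatible_retracts X d {1,2} Xs Bs Qo Qm theta"
proof
  have X0k: "Xs 0 \<subseteq> Xs k" if "k \<in> {1,2}" for k using X0 that by auto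
  have theta0: "dmor X d (Xs 0) x (Qo 0 x) (theta 0 x)" if "x \<in> Xs 0" for x
    using future_retractD(4)[OF Qfr that] by simp
  fix k l :: nat and z assume k: "k \<in> {1,2}" and l: "l \<in> {1,2}"
  show "z \<in> Xs k \<Longrightarrow> z \<in> Bs l \<Longrightarrow> z \<in> Bs k"
  proof (cases "k = l")
    case False
    assume z: "z \<in> Xs k" "z \<in> Bs l"
    then have z0: "z \<in> Xs 0" using False k l future_retractD(1)[OF Qfr[of l]] X0 by auto
    have "z \<in> Bs 0"
      by (rule compatible_retract_fixed[OF dsp X0k[OF l] XT[OF l] Qfr Qfr z0 z(2) Qunit[OF l z0]])
         (use l in auto)
    then show ?thesis using B0 k by auto
  qed simp
  show "z \<in> Xs k \<Longrightarrow> z \<in> Xs l \<Longrightarrow>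
      Qo k z = Qo l z \<and> dincl X d (topspace X) (theta k z) = dincl X d (topspace X) (theta l z)"
    using Qobj[of k z] Qobj[of l z] X0 k l
      compatible_units_agree[where S=Xs and u=theta, OF X0 X0k XT theta0 Qunit k _ l] by fastforce
qed (use dsp XT Qfr in auto)

theorem lemma4p7:
  fixes TX :: "'a topology" and d :: "(real \<Rightarrow> 'a) \<Rightarrow> bool"
    and Xs As Bs :: "nat \<Rightarrow> 'a set"
    and Qo :: "nat \<Rightarrow> 'a \<Rightarrow> 'a" and Qm :: "nat \<Rightarrow> (real \<Rightarrow> 'a) set \<Rightarrow> (real \<Rightarrow> 'a) set"
    and theta :: "nat \<Rightarrow> 'a \<Rightarrow> (real \<Rightarrow> 'a) set"
    and Po :: "nat \<Rightarrow> 'a \<Rightarrow> 'a" and Pm :: "nat \<Rightarrow> (real \<Rightarrow> 'a) set \<Rightarrow> (real \<Rightarrow> 'a) set"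
    and eta :: "nat \<Rightarrow> 'a \<Rightarrow> (real \<Rightarrow> 'a) set"
    and PPo :: "'a \<Rightarrow> 'a" and PPm :: "(real \<Rightarrow> 'a) set \<Rightarrow> (real \<Rightarrow> 'a) set"
    and A B :: "'a set"
  assumes dsp: "dspace TX d"
    and X12: "Xs 1 \<subseteq> topspace TX" "Xs 2 \<subseteq> topspace TX"
    and Xcov: "topspace TX = (TX interior_of Xs 1) \<union> (TX interior_of Xs 2)"
    and Xdip: "\<And>p. d p \<Longrightarrow> (\<exists>n::nat. \<exists>t::nat \<Rightarrow> real. t 0 = 0 \<and> t n = 1 \<and>
                  (\<forall>i<n. t i \<le> t (Suc i)) \<and>
                  (\<forall>i<n. p ` {t i..t (Suc i)} \<subseteq> Xs 1 \<or> p ` {t i..t (Suc i)} \<subseteq> Xs 2))"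
    and X0: "Xs 0 = Xs 1 \<inter> Xs 2"
    and AB: "\<And>k. k \<in> {0,1,2} \<Longrightarrow> As k \<subseteq> Bs k \<and> Bs k \<subseteq> Xs k"
    and A0: "As 0 = As 1 \<inter> As 2" and B0: "Bs 0 = Bs 1 \<inter> Bs 2"
    and Adef: "A = As 1 \<union> As 2" and Bdef: "B = Bs 1 \<union> Bs 2"
    and Acov: "A = (subtopology TX A interior_of As 1) \<union> (subtopology TX A interior_of As 2)"
    and Bcov: "B = (subtopology TX B interior_of Bs 1) \<union> (subtopology TX B interior_of Bs 2)"
    \<comment> \<open>compatible future retracts Q_k : pi_1(X_k) -> pi_1(X_k, B_k)\<close>
    and Qfr: "\<And>k. k \<in> {0,1,2} \<Longrightarrow> future_retract TX d (Xs k) (Bs k) (Xs k) (Qo k) (Qm k) (theta k)"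
    and Qobj: "\<And>k x. k \<in> {1,2} \<Longrightarrow> x \<in> Xs 0 \<Longrightarrow> Qo k x = Qo 0 x"
    and Qmor: "\<And>k x y f. k \<in> {1,2} \<Longrightarrow> x \<in> Xs 0 \<Longrightarrow> y \<in> Xs 0 \<Longrightarrow> dmor TX d (Xs 0) x y f \<Longrightarrow>
                 Qm k (dincl TX d (Xs k) f) = dincl TX d (Xs k) (Qm 0 f)"
    and Qunit: "\<And>k x. k \<in> {1,2} \<Longrightarrow> x \<in> Xs 0 \<Longrightarrow> theta k x = dincl TX d (Xs k) (theta 0 x)"
    \<comment> \<open>compatible future retracts P_k : pi_1(X_k, B_k) -> pi_1(X_k, A_k)\<close>
    and Pfr: "\<And>k. k \<in> {0,1,2} \<Longrightarrow> future_retract TX d (Xs k) (As k) (Bs k) (Po k) (Pm k) (eta k)"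
    and Pobj: "\<And>k x. k \<in> {1,2} \<Longrightarrow> x \<in> Bs 0 \<Longrightarrow> Po k x = Po 0 x"
    and Pmor: "\<And>k x y f. k \<in> {1,2} \<Longrightarrow> x \<in> Bs 0 \<Longrightarrow> y \<in> Bs 0 \<Longrightarrow> dmor TX d (Xs 0) x y f \<Longrightarrow>
                 Pm k (dincl TX d (Xs k) f) = dincl TX d (Xs k) (Pm 0 f)"
    and Punit: "\<And>k x. k \<in> {1,2} \<Longrightarrow> x \<in> Bs 0 \<Longrightarrow> eta k x = dincl TX d (Xs k) (eta 0 x)"
    \<comment> \<open>the (unique) functor P : pi_1(X, B) -> pi_1(X, A) with P o j_k = j'_k o P_k\<close>
    and PP: "dfunctor TX d (topspace TX) B (topspace TX) A PPo PPm"
    and PPobj: "\<And>k x. k \<in> {1,2} \<Longrightarrow> x \<in> Bs k \<Longrightarrow> PPo x = Po k x"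
    and PPmor: "\<And>k x y f. k \<in> {1,2} \<Longrightarrow> x \<in> Bs k \<Longrightarrow> y \<in> Bs k \<Longrightarrow> dmor TX d (Xs k) x y f \<Longrightarrow>
                 PPm (dincl TX d (topspace TX) f) = dincl TX d (topspace TX) (Pm k f)"
  shows "\<forall>k\<in>{1,2}. \<forall>l\<in>{1,2}. \<forall>x\<in>Bs k. \<forall>y\<in>Bs l. \<forall>f. dmor TX d (topspace TX) x y f \<longrightarrow>
           dcomp TX d (topspace TX) (dincl TX d (topspace TX) (eta l y)) f
             = dcomp TX d (topspace TX) (PPm f) (dincl TX d (topspace TX) (eta k x))"
proof -
  let ?T = "topspace TX"
  have XT: "Xs k \<subseteq> ?T" if "k \<in> {1,2}" for k using X12 that by auto
  interpret compatible_retracts TX d "{1,2}" Xs Bs Qo Qm theta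
    by (rule compatible_retracts_of_cover[OF dsp XT X0 B0 Qfr Qobj Qunit])
  have X0k: "Xs 0 \<subseteq> Xs k" if "k \<in> {1,2}" for k using X0 that by auto
  have eta0: "dmor TX d (Xs 0) x (Po 0 x) (eta 0 x)" if "x \<in> Bs 0" for x
    using future_retractD(4)[OF Pfr that] by simp
  have eta_agree: "dincl TX d ?T (eta k x) = dincl TX d ?T (eta l x)"
    if "k \<in> {1,2}" "l \<in> {1,2}" "x \<in> Bs k" "x \<in> Bs l" for k l x
    using compatible_units_agree[where S=Bs and u=eta, OF B0 X0k XT eta0 Punit] that by blast
  have Pfr12: "future_retract TX d (Xs k) (As k) (Bs k) (Po k) (Pm k) (eta k)" if "k \<in> {1,2}" for k
    using Pfr that by simp
  have Bs_B: "Bs k \<subseteq> B" if "k \<in> {1,2}" for k using Bdef that by auto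
  show ?thesis
  proof (intro ballI allI impI)
    fix k l x y f
    assume k: "k \<in> {1,2}" and l: "l \<in> {1,2}" and x: "x \<in> Bs k" and y: "y \<in> Bs l"
      and f: "dmor TX d ?T x y f"
    have "piecewise TX d {1,2} Xs Bs x y f"
      by (rule dmor_piecewise[OF _ f k x l y]) (use Xdip in simp)
    from piecewise_natural[OF dsp XT Pfr12 Bs_B PP PPobj PPmor eta_agree this k x l y]
    show "dcomp TX d ?T (dincl TX d ?T (eta l y)) f = dcomp TX d ?T (PPm f) (dincl TX d ?T (eta k x))" .
  qed
qed

end
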